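(* Let $k\ge 2$ and let $T$ be a tree of order $n$ with distance $k$-domination number $\gamma_k=\gamma_k(T)\ge 3$. Then \[ \Pi_1(T)\ge 4^{k\gamma_k-1}(n-k\gamma_k)^2 \quad\text{and}\quad \Pi_2(T)\le 4^{k\gamma_k-1}(n-k\gamma_k)^{n-k\gamma_k}. \] Either equality holds if and only if $T\cong T_{n,k,\gamma_k}$.
   Context: For a graph $G$ with vertex degrees $d_G(u)$: $\Pi_1(G)=\prod_{u\in V(G)}d_G(u)^2$ and $\Pi_2(G)=\prod_{uv\in E(G)}d_G(u)d_G(v)=\prod_{u\in V(G)}d_G(u)^{d_G(u)}$. A set $D\subseteq V(G)$ is a distance $k$-dominating set if every vertex not in $D$ is at distance at most $k$ from some vertex of $D$; $\gamma_k(G)$ is the minimum size of such a set. For positive integers $n,k,s$ with $n\ge (k+1)s$, $T_{n,k,s}$ is the starlike tree obtained from a vertex $c$ by attaching to $c$: one pendent path containing $k$ vertices other than $c$, $s-1$ pendent paths each containing $k+1$ vertices other than $c$, and $n-(k+1)s$ pendent vertices. It has $n$ vertices, $c$ has degree $n-ks$, and there are exactly $ks-1$ vertices of degree $2$. *)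

theory Defs
  imports Main
begin

definition graph :: "'a set \<Rightarrow> 'a set set \<Rightarrow> bool" where
  "graph V E \<longleftrightarrow> finite V \<and> (\<forall>e\<in>E. \<exists>u v. e = {u, v} \<and> u \<noteq> v \<and> u \<in> V \<and> v \<in> V)"

fun walk :: "'a set set \<Rightarrow> 'a list \<Rightarrow> bool" where
  "walk E [] = False"
| "walk E [v] = True"
| "walk E (u # v # xs) = ({u, v} \<in> E \<and> walk E (v # xs))"

definition connected_graph :: "'a set \<Rightarrow> 'a set set \<Rightarrow> bool" where
  "connected_graph V E \<longleftrightarrow>
     (\<forall>u\<in>V. \<forall>v\<in>V. \<exists>p. walk E p \<and> hd p = u \<and> last p = v)"

definition tree :: "'a set \<Rightarrow> 'a set set \<Rightarrow> bool" where
  "tree V E \<longleftrightarrow> graph V E \<and> V \<noteq> {} \<and> connected_graph V E \<and> card E = card V - 1"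

definition deg :: "'a set set \<Rightarrow> 'a \<Rightarrow> nat" where
  "deg E u = card {e \<in> E. u \<in> e}"

definition Pi1 :: "'a set \<Rightarrow> 'a set set \<Rightarrow> nat" where
  "Pi1 V E = (\<Prod>u\<in>V. deg E u ^ 2)"

definition Pi2 :: "'a set \<Rightarrow> 'a set set \<Rightarrow> nat" where
  "Pi2 V E = (\<Prod>e\<in>E. \<Prod>u\<in>e. deg E u)"

text \<open>dist(u,v) \<le> k: there is a walk from u to v with at most k edges.\<close>
definition dist_le :: "'a set set \<Rightarrow> 'a \<Rightarrow> 'a \<Rightarrow> nat \<Rightarrow> bool" where
  "dist_le E u v k \<longleftrightarrow> (\<exists>p. walk E p \<and> hd p = u \<and> last p = v \<and> length p \<le> k + 1)"

definition dist_dom_set :: "'a set \<Rightarrow> 'a set set \<Rightarrow> nat \<Rightarrow> 'a set \<Rightarrow> bool" where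
  "dist_dom_set V E k D \<longleftrightarrow> D \<subseteq> V \<and> (\<forall>v\<in>V - D. \<exists>u\<in>D. dist_le E u v k)"

definition gamma_k :: "'a set \<Rightarrow> 'a set set \<Rightarrow> nat \<Rightarrow> nat" where
  "gamma_k V E k = Min {card D | D. dist_dom_set V E k D}"

text \<open>The starlike tree T_{n,k,s}: centre (0,0); path 1 = (1,1),...,(1,k);
  paths i = 2..s: (i,1),...,(i,k+1); pendent vertices (i,1) for s < i \<le> s + (n-(k+1)s).\<close>
definition TV :: "nat \<Rightarrow> nat \<Rightarrow> nat \<Rightarrow> (nat \<times> nat) set" where
  "TV n k s = {(0,0)} \<union> {(1,j) | j. 1 \<le> j \<and> j \<le> k}
     \<union> {(i,j) | i j. 2 \<le> i \<and> i \<le> s \<and> 1 \<le> j \<and> j \<le> k + 1}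
     \<union> {(i,1) | i. s < i \<and> i \<le> s + (n - (k + 1) * s)}"

definition TE :: "nat \<Rightarrow> nat \<Rightarrow> nat \<Rightarrow> (nat \<times> nat) set set" where
  "TE n k s = {{(0,0), (i,1)} | i. 1 \<le> i \<and> i \<le> s + (n - (k + 1) * s)}
     \<union> {{(i,j), (i,j+1)} | i j. 1 \<le> j \<and> (i,j) \<in> TV n k s \<and> (i,j+1) \<in> TV n k s}"

definition graph_iso :: "'a set \<Rightarrow> 'a set set \<Rightarrow> 'b set \<Rightarrow> 'b set set \<Rightarrow> bool" where
  "graph_iso V E W F \<longleftrightarrow> (\<exists>f. bij_betw f V W \<and>
     (\<forall>u\<in>V. \<forall>v\<in>V. {u, v} \<in> E \<longleftrightarrow> {f u, f v} \<in> F))"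

end

theory Submission
  imports Defs
begin

text \<open>
  A Meir--Moon type induction (cut off the subtree below the \<open>k\<close>-th ancestor of a
  deepest vertex) gives a distance \<open>k\<close>-dominating set of size at most \<open>max 1 (m / k)\<close> and at most
  \<open>max 1 (n / (k + 1))\<close>, where \<open>m\<close> is the number of non-leaves; hence \<open>k \<gamma>\<^sub>k \<le> m\<close> and
  \<open>(k + 1) \<gamma>\<^sub>k \<le> n\<close>.  Tree degrees are positive with sum \<open>2 (n - 1)\<close>, so the non-leaf degrees
  sum to \<open>n - 2 + m\<close>.  Merging two non-leaf degrees \<open>x, y\<close> into \<open>x + y - 2\<close> gives
  \<open>\<Prod> d \<ge> 2\<^bsup>m - 1\<^esup> (n - m)\<close> and \<open>\<Prod> d\<^sup>d \<le> 4\<^bsup>m - 1\<^esup> (n - m)\<^bsup>n - m\<^esup>\<close>, strictly if two degrees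
  exceed 2, and both bounds are monotone in \<open>m \<ge> k \<gamma>\<^sub>k\<close>.  Equality thus forces \<open>m = k \<gamma>\<^sub>k\<close> and a
  single vertex of degree above 2, i.e. a spider with centre degree \<open>n - k \<gamma>\<^sub>k\<close>.  Its legs have
  \<open>k \<gamma>\<^sub>k - 1\<close> non-head vertices in total; comparing \<open>\<gamma>\<^sub>k\<close> with two explicit dominating sets pins
  the leg lengths down to those of \<open>T\<^sub>n\<^sub>,\<^sub>k\<^sub>,\<^sub>\<gamma>\<close>.
\<close>

section \<open>Walks, distances and distance domination\<close>

lemma walk_Cons: "walk E (u # xs) \<longleftrightarrow> xs = [] \<or> {u, hd xs} \<in> E \<and> walk E xs"
  by (cases xs) auto

lemma walk_append:
  "walk E (xs @ y # ys) \<longleftrightarrow> (xs = [] \<or> walk E xs \<and> {last xs, y} \<in> E) \<and> walk E (y # ys)"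
proof (induction xs)
  case (Cons a xs)
  then show ?case by (cases xs) auto
qed simp

lemma walk_rev: "walk E (rev p) \<longleftrightarrow> walk E p"
proof (induction p rule: rev_induct)
  case (snoc x xs)
  then show ?case by (cases xs rule: rev_cases) (auto simp: walk_append insert_commute)
qed simp

lemma walk_mono: "walk E p \<Longrightarrow> E \<subseteq> F \<Longrightarrow> walk F p"
  by (induction p rule: walk.induct) auto

lemma walk_join:
  assumes "walk E p" "walk E q" "last p = hd q"
  shows "walk E (p @ tl q)"
proof -
  obtain y ys where q: "q = y # ys" using assms(2) by (cases q) auto
  have "p \<noteq> []" using assms(1) by (cases p) auto
  then show ?thesis
    using assms q by (cases ys) (auto simp: walk_append)
qed

lemma walk_remove_cycles:
  "walk E p \<Longrightarrow> \<exists>q. walk E q \<and> hd q = hd p \<and> last q = last p \<and> distinct q"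
proof (induction "length p" arbitrary: p rule: less_induct)
  case less
  show ?case
  proof (cases "distinct p")
    case False
    then obtain xs y ys zs where p: "p = xs @ [y] @ ys @ [y] @ zs"
      using not_distinct_decomp by blast
    have "walk E (xs @ y # (ys @ y # zs))" using less.prems p by simp
    then have w1: "xs = [] \<or> walk E xs \<and> {last xs, y} \<in> E" and "walk E (y # ys @ y # zs)"
      unfolding walk_append by auto
    then have "walk E ((y # ys) @ y # zs)" by simp
    then have "walk E (y # zs)" unfolding walk_append by blast
    with w1 have "walk E (xs @ y # zs)" unfolding walk_append by blast
    moreover have "length (xs @ y # zs) < length p" using p by simp
    ultimately obtain q where "walk E q" "hd q = hd (xs @ y # zs)"
      "last q = last (xs @ y # zs)" "distinct q"
      using less.hyps by blast
    then show ?thesis using p by (cases xs; cases zs) auto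
  qed (use less.prems in blast)
qed

lemma walk_avoiding: "walk E q \<Longrightarrow> x \<notin> set q \<Longrightarrow> walk {e\<in>E. x \<notin> e} q"
  by (induction q) (auto simp: walk_Cons)

lemma dist_le_refl: "dist_le E u u k"
  unfolding dist_le_def by (rule exI[of _ "[u]"]) auto

lemma dist_le_sym: "dist_le E u v k \<Longrightarrow> dist_le E v u k"
  unfolding dist_le_def
proof (elim exE conjE)
  fix p assume p: "walk E p" "hd p = u" "last p = v" "length p \<le> k + 1"
  then show "\<exists>q. walk E q \<and> hd q = v \<and> last q = u \<and> length q \<le> k + 1"
    using walk_rev[of E p] by (intro exI[of _ "rev p"]) (cases p; auto simp: hd_rev last_rev)
qed

lemma dist_le_mono: "dist_le E u v k \<Longrightarrow> k \<le> l \<Longrightarrow> dist_le E u v l"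
  unfolding dist_le_def by fastforce

lemma dist_le_trans: "dist_le E u v a \<Longrightarrow> dist_le E v w b \<Longrightarrow> dist_le E u w (a + b)"
  unfolding dist_le_def
proof (elim exE conjE)
  fix p q
  assume p: "walk E p" "hd p = u" "last p = v" "length p \<le> a + 1"
    and q: "walk E q" "hd q = v" "last q = w" "length q \<le> b + 1"
  have ne: "p \<noteq> []" "q \<noteq> []" using p q by (auto elim: walk.elims)
  show "\<exists>pq. walk E pq \<and> hd pq = u \<and> last pq = w \<and> length pq \<le> a + b + 1"
  proof (rule exI[of _ "p @ tl q"], intro conjI)
    show "walk E (p @ tl q)" using walk_join[of E p q] p q by simp
    show "hd (p @ tl q) = u" using ne p by simp
    show "last (p @ tl q) = w" using ne p q by (cases q) auto
    show "length (p @ tl q) \<le> a + b + 1" using ne p q by (cases q) auto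
  qed
qed

lemma dist_le_mono_edges: "dist_le E u v k \<Longrightarrow> E \<subseteq> F \<Longrightarrow> dist_le F u v k"
  unfolding dist_le_def using walk_mono by blast

lemma dist_le_edge: "{u, v} \<in> E \<Longrightarrow> dist_le E u v 1"
  unfolding dist_le_def by (rule exI[of _ "[u, v]"]) auto

lemma dist_dom_set_iff: "dist_dom_set V E k D \<longleftrightarrow> D \<subseteq> V \<and> (\<forall>v\<in>V. \<exists>u\<in>D. dist_le E u v k)"
proof -
  have "(\<forall>v\<in>V - D. \<exists>u\<in>D. dist_le E u v k) \<longleftrightarrow> (\<forall>v\<in>V. \<exists>u\<in>D. dist_le E u v k)" if "D \<subseteq> V"
  proof
    assume a: "\<forall>v\<in>V - D. \<exists>u\<in>D. dist_le E u v k"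
    show "\<forall>v\<in>V. \<exists>u\<in>D. dist_le E u v k"
    proof
      fix v assume "v \<in> V"
      then show "\<exists>u\<in>D. dist_le E u v k"
        using a dist_le_refl[of E v k] by (cases "v \<in> D") auto
    qed
  qed simp
  then show ?thesis unfolding dist_dom_set_def by blast
qed

lemma gamma_k_le_card: "finite V \<Longrightarrow> dist_dom_set V E k D \<Longrightarrow> gamma_k V E k \<le> card D"
proof -
  assume "finite V" "dist_dom_set V E k D"
  moreover have "{card D | D. dist_dom_set V E k D} \<subseteq> {..card V}"
    using \<open>finite V\<close> unfolding dist_dom_set_def by (auto intro: card_mono)
  then have "finite {card D | D. dist_dom_set V E k D}" by (rule finite_subset) simp
  ultimately show ?thesis unfolding gamma_k_def by (intro Min_le) auto
qed

lemma graph_edgeE: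
  assumes "graph V E" "e \<in> E"
  obtains u v where "e = {u, v}" "u \<noteq> v" "u \<in> V" "v \<in> V"
  using assms unfolding graph_def by meson

lemma graph_edge_subset: "graph V E \<Longrightarrow> e \<in> E \<Longrightarrow> e \<subseteq> V"
  by (metis graph_edgeE empty_subsetI insert_subset)

lemma graph_finite_edges: "graph V E \<Longrightarrow> finite E"
proof -
  assume g: "graph V E"
  then have "E \<subseteq> Pow V" using graph_edge_subset by blast
  moreover have "finite V" using g unfolding graph_def by blast
  ultimately show ?thesis by (meson finite_Pow_iff finite_subset)
qed

lemma graph_card_edge: "graph V E \<Longrightarrow> e \<in> E \<Longrightarrow> card e = 2"
  by (metis graph_edgeE card_2_iff)

lemma sum_deg_eq:
  assumes "graph V E"
  shows "(\<Sum>v\<in>V. deg E v) = 2 * card E"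
proof -
  have fV: "finite V" and fE: "finite E"
    using assms graph_finite_edges unfolding graph_def by auto
  have "(\<Sum>v\<in>V. deg E v) = (\<Sum>v\<in>V. \<Sum>e\<in>E. if v \<in> e then 1 else 0)"
    unfolding deg_def using fE by (simp add: sum.inter_filter[symmetric])
  also have "\<dots> = (\<Sum>e\<in>E. \<Sum>v\<in>V. if v \<in> e then 1 else 0)" by (rule sum.swap)
  also have "\<dots> = (\<Sum>e\<in>E. card (V \<inter> e))" using fV by (simp add: sum.If_cases)
  also have "\<dots> = (\<Sum>e\<in>E. 2)"
  proof (rule sum.cong)
    fix e assume "e \<in> E"
    then show "card (V \<inter> e) = 2"
      using graph_edge_subset[OF assms] graph_card_edge[OF assms] by (simp add: Int_absorb1)
  qed simp
  finally show ?thesis by simp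
qed

text \<open>Double counting: \<open>u\<close> lies on \<open>deg E u\<close> edges, each contributing a factor \<open>deg E u\<close>.\<close>
lemma Pi2_eq_prod_deg_power:
  assumes "graph V E"
  shows "Pi2 V E = (\<Prod>u\<in>V. deg E u ^ deg E u)"
proof -
  have fV: "finite V" and fE: "finite E"
    using assms graph_finite_edges unfolding graph_def by auto
  have "Pi2 V E = (\<Prod>e\<in>E. \<Prod>u\<in>V. if u \<in> e then deg E u else 1)"
    unfolding Pi2_def
  proof (rule prod.cong)
    fix e assume "e \<in> E"
    then have "{u\<in>V. u \<in> e} = e" using graph_edge_subset[OF assms] by blast
    then show "(\<Prod>u\<in>e. deg E u) = (\<Prod>u\<in>V. if u \<in> e then deg E u else 1)"
      using prod.inter_filter[OF fV, of "deg E" "\<lambda>u. u \<in> e"] by simp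
  qed simp
  also have "\<dots> = (\<Prod>u\<in>V. \<Prod>e\<in>E. if u \<in> e then deg E u else 1)" by (rule prod.swap)
  also have "\<dots> = (\<Prod>u\<in>V. deg E u ^ deg E u)"
  proof (rule prod.cong)
    fix u
    have "(\<Prod>e\<in>E. if u \<in> e then deg E u else 1) = (\<Prod>e\<in>{e\<in>E. u \<in> e}. deg E u)"
      using prod.inter_filter[OF fE, of "\<lambda>_. deg E u" "\<lambda>e. u \<in> e"] by simp
    then show "(\<Prod>e\<in>E. if u \<in> e then deg E u else 1) = deg E u ^ deg E u"
      by (simp add: deg_def)
  qed simp
  finally show ?thesis .
qed

lemma deg_eq_card_nbrs:
  assumes "graph V E"
  shows "deg E u = card {v\<in>V. {u, v} \<in> E}"
proof -
  have "{e\<in>E. u \<in> e} = (\<lambda>v. {u, v}) ` {v\<in>V. {u, v} \<in> E}"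
  proof
    show "{e\<in>E. u \<in> e} \<subseteq> (\<lambda>v. {u, v}) ` {v\<in>V. {u, v} \<in> E}"
    proof
      fix e assume e: "e \<in> {e\<in>E. u \<in> e}"
      then obtain a b where ab: "e = {a, b}" "a \<in> V" "b \<in> V"
        using assms unfolding graph_def by blast
      then have "e = {u, if a = u then b else a}" "(if a = u then b else a) \<in> V"
        using e by auto
      then show "e \<in> (\<lambda>v. {u, v}) ` {v\<in>V. {u, v} \<in> E}" using e by force
    qed
  qed auto
  moreover have "inj_on (\<lambda>v. {u, v}) {v\<in>V. {u, v} \<in> E}"
    using assms unfolding graph_def by (fastforce simp: inj_on_def doubleton_eq_iff)
  ultimately show ?thesis unfolding deg_def by (simp add: card_image)
qed

lemma graph_iso_deg:
  assumes "graph V E" "graph W F" and f: "bij_betw f V W"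
    and pres: "\<forall>u\<in>V. \<forall>v\<in>V. {u, v} \<in> E \<longleftrightarrow> {f u, f v} \<in> F" and u: "u \<in> V"
  shows "deg E u = deg F (f u)"
proof -
  have "{w\<in>W. {f u, w} \<in> F} = f ` {v\<in>V. {u, v} \<in> E}"
    using f pres u unfolding bij_betw_def by auto
  moreover have "inj_on f {v\<in>V. {u, v} \<in> E}"
    using f unfolding bij_betw_def by (auto intro: inj_on_subset)
  ultimately show ?thesis
    using deg_eq_card_nbrs[OF assms(1)] deg_eq_card_nbrs[OF assms(2)] by (simp add: card_image)
qed

section \<open>Trees rooted at a vertex\<close>

locale rooted_tree =
  fixes V :: "'a set" and E :: "'a set set" and r :: 'a and p :: "'a \<Rightarrow> 'a" and d :: "'a \<Rightarrow> nat"
  assumes finite_vertices: "finite V" and root_in: "r \<in> V" and depth_root: "d r = 0"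
    and parent_in: "\<And>v. v \<in> V \<Longrightarrow> v \<noteq> r \<Longrightarrow> p v \<in> V"
    and depth_parent: "\<And>v. v \<in> V \<Longrightarrow> v \<noteq> r \<Longrightarrow> d v = Suc (d (p v))"
    and edges_eq: "E = (\<lambda>v. {v, p v}) ` (V - {r})"

lemma tree_deg_ge_1:
  assumes t: "tree V E" and v: "v \<in> V" and c: "card V \<ge> 2"
  shows "deg E v \<ge> 1"
proof -
  have g: "graph V E" using t unfolding tree_def by blast
  have "V \<noteq> {v}" using c by auto
  then obtain u where u: "u \<in> V" "u \<noteq> v" using v by blast
  obtain w where w: "walk E w" "hd w = v" "last w = u"
    using t v u unfolding tree_def connected_graph_def by blast
  then obtain x xs where "w = v # x # xs" using u by (cases w; cases "tl w") auto
  then have "{v, x} \<in> {e \<in> E. v \<in> e}" using w by simp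
  moreover have "finite {e \<in> E. v \<in> e}" using graph_finite_edges[OF g] by simp
  ultimately have "card {e \<in> E. v \<in> e} \<noteq> 0" by auto
  then show ?thesis unfolding deg_def by simp
qed

lemma tree_sum_deg: "tree V E \<Longrightarrow> (\<Sum>v\<in>V. deg E v) = 2 * (card V - 1)"
  unfolding tree_def using sum_deg_eq[of V E] by simp

lemma tree_exists_leaf:
  assumes t: "tree V E" and r: "r \<in> V" and c: "card V \<ge> 2"
  shows "\<exists>x\<in>V. x \<noteq> r \<and> deg E x = 1"
proof (rule ccontr)
  assume "\<not> ?thesis"
  then have "\<forall>x\<in>V - {r}. 2 \<le> deg E x" using tree_deg_ge_1[OF t _ c] by fastforce
  moreover have fV: "finite V" using t unfolding tree_def graph_def by blast
  ultimately have "deg E r + 2 * (card V - 1) \<le> deg E r + (\<Sum>v\<in>V - {r}. deg E v)"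
    using r sum_mono[of "V - {r}" "\<lambda>_. 2" "deg E"] by simp
  also have "\<dots> = (\<Sum>v\<in>V. deg E v)" using fV r by (simp add: sum.remove)
  finally show False using tree_sum_deg[OF t] tree_deg_ge_1[OF t r c] by simp
qed

text \<open>An inner vertex of a path has two distinct neighbours on it, but a leaf has only one.\<close>
lemma distinct_walk_avoids_leaf:
  assumes q: "walk E q" "distinct q" "hd q \<noteq> x" "last q \<noteq> x"
    and only_edge: "\<And>z. {x, z} \<in> E \<Longrightarrow> z = y"
  shows "x \<notin> set q"
proof
  assume "x \<in> set q"
  then obtain xs ys where qs: "q = xs @ x # ys" by (meson split_list)
  have "xs \<noteq> []" "ys \<noteq> []" using qs q by auto
  then obtain z zs where ys: "ys = z # zs" by (cases ys) auto
  have w: "walk E (xs @ x # z # zs)" using q qs ys by simp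
  then have "{x, last xs} \<in> E"
    using \<open>xs \<noteq> []\<close> unfolding walk_append by (simp add: insert_commute)
  then have "last xs = y" by (rule only_edge)
  have "{x, z} \<in> E" using w unfolding walk_append by simp
  then have "z = y" by (rule only_edge)
  have "y \<in> set xs" using \<open>xs \<noteq> []\<close> \<open>last xs = y\<close> last_in_set by metis
  moreover have "y \<in> set ys" using ys \<open>z = y\<close> by simp
  ultimately show False using q(2) qs by (simp add: disjoint_iff)
qed

lemma tree_remove_leaf:
  assumes t: "tree V E" and x: "x \<in> V" and dx: "deg E x = 1" and c: "card V \<ge> 2"
  obtains y where "y \<in> V" "{x, y} \<in> E" "tree (V - {x}) (E - {{x, y}})"
proof -
  have g: "graph V E" and fV: "finite V" and con: "connected_graph V E"
    and cE: "card E = card V - 1" using t unfolding tree_def graph_def by auto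
  obtain e0 where e0: "{e\<in>E. x \<in> e} = {e0}"
    using dx unfolding deg_def by (meson card_1_singletonE)
  then have "e0 \<in> E" "x \<in> e0" by auto
  then obtain a b where "e0 = {a, b}" "a \<noteq> b" "a \<in> V" "b \<in> V"
    using g unfolding graph_def by meson
  then obtain y where y: "e0 = {x, y}" "y \<noteq> x" "y \<in> V"
    using \<open>x \<in> e0\<close> by (metis insert_commute insertE singletonD)
  have "{x, y} \<in> E" using \<open>e0 \<in> E\<close> y by simp
  have only_edge: "z = y" if "{x, z} \<in> E" for z
  proof -
    have "{x, z} \<in> {e\<in>E. x \<in> e}" using that by simp
    then have "{x, z} = {x, y}" using e0 y by simp
    then show ?thesis using y(2) by (auto simp: doubleton_eq_iff)
  qed
  have graph': "graph (V - {x}) (E - {{x, y}})"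
    unfolding graph_def
  proof (intro conjI ballI)
    fix e assume e: "e \<in> E - {{x, y}}"
    then obtain u v where "e = {u, v}" "u \<noteq> v" "u \<in> V" "v \<in> V" using g graph_edgeE by blast
    moreover have "x \<notin> e" using e e0 y by blast
    ultimately show "\<exists>u v. e = {u, v} \<and> u \<noteq> v \<and> u \<in> V - {x} \<and> v \<in> V - {x}" by blast
  qed (use fV in simp)
  have connected': "connected_graph (V - {x}) (E - {{x, y}})"
    unfolding connected_graph_def
  proof (intro ballI)
    fix a b assume a: "a \<in> V - {x}" and b: "b \<in> V - {x}"
    obtain w where w: "walk E w" "hd w = a" "last w = b"
      using con a b unfolding connected_graph_def by blast
    obtain q where q: "walk E q" "hd q = a" "last q = b" "distinct q"
      using walk_remove_cycles[OF w(1)] w(2,3) by auto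
    have "x \<notin> set q" using distinct_walk_avoids_leaf[OF q(1,4)] q(2,3) a b only_edge by auto
    then have "walk {e\<in>E. x \<notin> e} q" by (rule walk_avoiding[OF q(1)])
    then have "walk (E - {{x, y}}) q" by (rule walk_mono) auto
    then show "\<exists>w. walk (E - {{x, y}}) w \<and> hd w = a \<and> last w = b" using q by blast
  qed
  have "card (E - {{x, y}}) = card (V - {x}) - 1"
    using cE graph_finite_edges[OF g] fV x c \<open>{x, y} \<in> E\<close> by (simp add: card_Diff_singleton)
  moreover have "V - {x} \<noteq> {}" using y by blast
  ultimately show ?thesis using that y \<open>{x, y} \<in> E\<close> graph' connected' unfolding tree_def by blast
qed

text \<open>Peeling leaves other than \<open>r\<close> one at a time; the removed leaf gets its unique neighbour as parent.\<close>
lemma tree_rooted_tree: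
  "tree V E \<Longrightarrow> r \<in> V \<Longrightarrow> \<exists>p d. rooted_tree V E r p d"
proof (induction "card V" arbitrary: V E rule: less_induct)
  case less
  have fV: "finite V" and cE: "card E = card V - 1" and g: "graph V E"
    using less.prems unfolding tree_def graph_def by auto
  show ?case
  proof (cases "card V \<ge> 2")
    case False
    then have "card V = 1" using less.prems(2) fV
      by (metis One_nat_def card_0_eq empty_iff less_2_cases not_less)
    then have V: "V = {r}" using less.prems(2) by (metis card_1_singletonE singletonD)
    then have "E = {}" using cE graph_finite_edges[OF g] by simp
    then have "rooted_tree V E r id (\<lambda>_. 0)" using V by unfold_locales auto
    then show ?thesis by blast
  next
    case True
    obtain x where x: "x \<in> V" "x \<noteq> r" "deg E x = 1"
      using tree_exists_leaf[OF less.prems True] by blast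
    obtain y where y: "y \<in> V" "{x, y} \<in> E" and t': "tree (V - {x}) (E - {{x, y}})"
      using tree_remove_leaf[OF less.prems(1) x(1) x(3) True] by blast
    have "card (V - {x}) < card V" using x fV by (meson card_Diff1_less)
    then obtain p d where pd: "rooted_tree (V - {x}) (E - {{x, y}}) r p d"
      using less.hyps t' x less.prems by blast
    interpret T: rooted_tree "V - {x}" "E - {{x, y}}" r p d by (fact pd)
    have "y \<noteq> x" using g y(2) unfolding graph_def by (metis doubleton_eq_iff)
    have "rooted_tree V E r (p(x := y)) (d(x := Suc (d y)))"
    proof
      have "E = insert {x, y} (E - {{x, y}})" using y by blast
      also have "E - {{x, y}} = (\<lambda>v. {v, (p(x := y)) v}) ` (V - {x} - {r})"
        unfolding T.edges_eq by (rule image_cong) auto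
      finally show "E = (\<lambda>v. {v, (p(x := y)) v}) ` (V - {r})" using x by auto
    qed (use fV less.prems x y \<open>y \<noteq> x\<close> T.parent_in T.depth_parent T.depth_root in auto)
    then show ?thesis by blast
  qed
qed

context rooted_tree
begin

lemma finite_edges: "finite E" using finite_vertices edges_eq by simp

lemma depth_pos: "v \<in> V \<Longrightarrow> v \<noteq> r \<Longrightarrow> d v > 0" using depth_parent by simp

lemma depth_eq_0: "v \<in> V \<Longrightarrow> d v = 0 \<Longrightarrow> v = r" using depth_parent by fastforce

lemma parent_neq: "v \<in> V \<Longrightarrow> v \<noteq> r \<Longrightarrow> p v \<noteq> v" using depth_parent by (metis n_not_Suc_n)

lemma parent_edge: "v \<in> V \<Longrightarrow> v \<noteq> r \<Longrightarrow> {v, p v} \<in> E" using edges_eq by blast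

definition anc :: "nat \<Rightarrow> 'a \<Rightarrow> 'a" where "anc j v = (p ^^ j) v"

lemma anc_0 [simp]: "anc 0 v = v" unfolding anc_def by simp
lemma anc_Suc: "anc (Suc j) v = p (anc j v)" unfolding anc_def by simp
lemma anc_Suc': "anc (Suc j) v = anc j (p v)"
  unfolding anc_def by (simp only: funpow_Suc_right comp_def)
lemma anc_add: "anc (i + j) v = anc i (anc j v)" unfolding anc_def by (simp add: funpow_add)

lemma anc_in_and_depth: "v \<in> V \<Longrightarrow> j \<le> d v \<Longrightarrow> anc j v \<in> V \<and> d (anc j v) = d v - j"
proof (induction j)
  case (Suc j)
  then have "anc j v \<in> V" "d (anc j v) = d v - j" "anc j v \<noteq> r" using depth_root by auto
  then show ?case using parent_in depth_parent by (simp add: anc_Suc)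
qed simp

lemma anc_in: "v \<in> V \<Longrightarrow> j \<le> d v \<Longrightarrow> anc j v \<in> V"
  using anc_in_and_depth by blast

lemma depth_anc: "v \<in> V \<Longrightarrow> j \<le> d v \<Longrightarrow> d (anc j v) = d v - j"
  using anc_in_and_depth by blast

lemma anc_depth: "v \<in> V \<Longrightarrow> anc (d v) v = r"
  using anc_in_and_depth[of v "d v"] depth_eq_0 by simp

lemma dist_le_anc: "v \<in> V \<Longrightarrow> j \<le> d v \<Longrightarrow> dist_le E v (anc j v) j"
proof (induction j)
  case (Suc j)
  have "anc j v \<in> V" "anc j v \<noteq> r" using anc_in_and_depth[of v j] Suc.prems depth_root by auto
  then have "dist_le E (anc j v) (anc (Suc j) v) 1"
    unfolding anc_Suc by (intro dist_le_edge parent_edge)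
  with Suc show ?case using dist_le_trans by fastforce
qed (simp add: dist_le_refl)

lemma dist_le_from_anc: "v \<in> V \<Longrightarrow> j \<le> d v \<Longrightarrow> dist_le E (anc j v) v j"
  by (rule dist_le_sym[OF dist_le_anc])

text \<open>The non-root vertices whose parent edge contains \<open>v\<close>: \<open>v\<close> itself and its children.\<close>
definition incident :: "'a \<Rightarrow> 'a set" where
  "incident v = {y \<in> V - {r}. y = v \<or> p y = v}"

lemma inj_on_parent_edge: "inj_on (\<lambda>y. {y, p y}) (V - {r})"
proof (rule inj_onI)
  fix y z assume y: "y \<in> V - {r}" and z: "z \<in> V - {r}" and eq: "{y, p y} = {z, p z}"
  show "y = z"
  proof (rule ccontr)
    assume "y \<noteq> z"
    then have "y = p z" "z = p y" using eq by (auto simp: doubleton_eq_iff)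
    then show False
      using depth_parent y z by (metis DiffD1 DiffD2 Suc_n_not_le_n insertI1 le_SucI order_refl)
  qed
qed

lemma finite_incident: "finite (incident v)"
  unfolding incident_def using finite_vertices by simp

lemma deg_eq_card_incident: "deg E v = card (incident v)"
proof -
  have "{e\<in>E. v \<in> e} = (\<lambda>y. {y, p y}) ` incident v" unfolding edges_eq incident_def by auto
  moreover have "inj_on (\<lambda>y. {y, p y}) (incident v)"
    using inj_on_parent_edge by (rule inj_on_subset) (auto simp: incident_def)
  ultimately show ?thesis unfolding deg_def by (simp add: card_image)
qed

lemma two_le_deg: "a \<in> incident v \<Longrightarrow> b \<in> incident v \<Longrightarrow> a \<noteq> b \<Longrightarrow> 2 \<le> deg E v"
  using card_mono[OF finite_incident, of "{a, b}" v] by (simp add: deg_eq_card_incident)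

lemma two_le_deg_if_child:
  "y \<in> V \<Longrightarrow> y \<noteq> r \<Longrightarrow> c \<in> V \<Longrightarrow> c \<noteq> r \<Longrightarrow> p c = y \<Longrightarrow> 2 \<le> deg E y"
  using two_le_deg[of y y c] parent_neq unfolding incident_def by force

lemma two_le_deg_if_children:
  "c \<in> V - {r} \<Longrightarrow> c' \<in> V - {r} \<Longrightarrow> p c = y \<Longrightarrow> p c' = y \<Longrightarrow> c \<noteq> c' \<Longrightarrow> 2 \<le> deg E y"
  using two_le_deg[of c y c'] unfolding incident_def by blast

lemma graph: "graph V E"
  unfolding graph_def
proof (intro conjI ballI)
  fix e assume "e \<in> E"
  then obtain v where "v \<in> V - {r}" "e = {v, p v}" using edges_eq by blast
  then show "\<exists>u v. e = {u, v} \<and> u \<noteq> v \<and> u \<in> V \<and> v \<in> V" using parent_in parent_neq by blast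
qed (rule finite_vertices)

lemma restrict:
  assumes "R \<subseteq> V" "r \<in> R" "\<And>y. y \<in> R \<Longrightarrow> y \<noteq> r \<Longrightarrow> p y \<in> R"
  shows "rooted_tree R ((\<lambda>v. {v, p v}) ` (R - {r})) r p d"
  using assms finite_vertices depth_root depth_parent by unfold_locales (auto intro: finite_subset)

lemma anc_pred_child:
  assumes "v \<in> V" "1 \<le> j" "j \<le> d v"
  shows "anc (j - 1) v \<in> V - {r}" "p (anc (j - 1) v) = anc j v"
proof -
  have "anc (j - 1) v \<in> V" "d (anc (j - 1) v) = d v - (j - 1)"
    using anc_in_and_depth[of v "j - 1"] assms by auto
  then show "anc (j - 1) v \<in> V - {r}" using assms depth_root by auto
  show "p (anc (j - 1) v) = anc j v" using anc_Suc[of "j - 1" v] assms(2) by simp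
qed

lemma inj_on_anc: "v \<in> V \<Longrightarrow> inj_on (\<lambda>j. anc j v) {..d v}"
proof (rule inj_onI)
  fix a b assume "v \<in> V" "a \<in> {..d v}" "b \<in> {..d v}" "anc a v = anc b v"
  then show "a = b" using depth_anc[of v a] depth_anc[of v b] by auto
qed

lemma anc_closed:
  assumes "R \<subseteq> V" "\<And>y. y \<in> R \<Longrightarrow> y \<noteq> r \<Longrightarrow> p y \<in> R" "y \<in> R" "j \<le> d y"
  shows "anc j y \<in> R"
  using assms(4)
proof (induction j)
  case (Suc j)
  have "d (anc j y) = d y - j" using assms depth_anc Suc.prems by (meson Suc_leD subsetD)
  then have "anc j y \<noteq> r" using Suc.prems depth_root by auto
  then show ?case using Suc assms(2) by (simp add: anc_Suc)
qed (use assms(3) in simp)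

lemma exists_least_common_anc:
  assumes x: "x \<in> V" and v: "v \<in> V"
  obtains i j where "i \<le> d x" "j \<le> d v" "anc i x = anc j v"
    and "\<And>i' j'. i' \<le> d x \<Longrightarrow> j' < j \<Longrightarrow> anc i' x \<noteq> anc j' v"
proof -
  define J where "J = {j. j \<le> d v \<and> (\<exists>i \<le> d x. anc i x = anc j v)}"
  have "d v \<in> J" unfolding J_def using anc_depth x v by auto
  define j where "j = Least (\<lambda>j. j \<in> J)"
  have "j \<in> J" unfolding j_def by (rule LeastI) fact
  moreover have "j' \<notin> J" if "j' < j" for j'
    using that not_less_Least unfolding j_def by blast
  ultimately show ?thesis
    using that unfolding J_def by (smt (verit) dual_order.trans less_imp_le mem_Collect_eq)
qed

lemma two_le_deg_on_path_to_meeting: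
  assumes u: "u \<in> V" and xV: "x \<in> V"
    and i0: "i0 \<le> d x" and j0_pos: "1 \<le> j0" and j0: "j0 \<le> d u"
    and meet: "anc i0 x = anc j0 u" and least: "\<And>i j. i \<le> d x \<Longrightarrow> j < j0 \<Longrightarrow> anc i x \<noteq> anc j u"
    and q: "q \<in> (\<lambda>j. anc j u) ` {1..<j0} \<union> (\<lambda>i. anc i x) ` {1..i0}"
  shows "2 \<le> deg E q"
proof -
  have r_anc_x: "anc (d x) x = r" by (rule anc_depth[OF xV])
  from q consider (up) j where "1 \<le> j" "j < j0" "q = anc j u"
    | (down) i where "1 \<le> i" "i \<le> i0" "q = anc i x" by auto
  then show ?thesis
  proof cases
    case up
    then have "q \<noteq> r" using least[of "d x" j] r_anc_x by auto
    then show ?thesis using up anc_pred_child[OF u, of j] anc_in[OF u, of j] j0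
      by (intro two_le_deg_if_child) auto
  next
    case down
    note child = anc_pred_child[OF xV down(1)]
    show ?thesis
    proof (cases "q = r")
      case True
      \<comment> \<open>the meeting point is the root: it has a child on each of the two branches\<close>
      then have "i = i0" using down depth_anc[OF xV, of i] depth_root i0 by auto
      then have "q = anc j0 u" using down meet by simp
      moreover note anc_pred_child[OF u j0_pos j0]
      moreover have "anc (i - 1) x \<noteq> anc (j0 - 1) u"
        using least[of "i - 1" "j0 - 1"] down j0_pos i0 by simp
      ultimately show ?thesis using child down i0 by (intro two_le_deg_if_children) auto
    next
      case False
      then show ?thesis
        using child down anc_in[OF xV, of i] i0 by (intro two_le_deg_if_child) auto
    qed
  qed
qed

lemma far_vertex_inner_vertices:
  assumes u: "u \<in> V" "u \<noteq> r" and R: "R \<subseteq> V" "\<And>y. y \<in> R \<Longrightarrow> y \<noteq> r \<Longrightarrow> p y \<in> R"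
    and x: "x \<in> R" and pu: "p u \<in> R" and uR: "u \<notin> R" and far: "\<not> dist_le E u x k"
  obtains Q where "Q \<subseteq> R" "k \<le> card Q" "x \<notin> Q" "\<And>q. q \<in> Q \<Longrightarrow> 2 \<le> deg E q"
proof -
  have xV: "x \<in> V" using x R by auto
  obtain i0 j0 where i0: "i0 \<le> d x" and j0: "j0 \<le> d u" and meet: "anc i0 x = anc j0 u"
    and least: "\<And>i j. i \<le> d x \<Longrightarrow> j < j0 \<Longrightarrow> anc i x \<noteq> anc j u"
    using exists_least_common_anc[OF xV u(1)] by blast
  have "anc i0 x \<in> R" using anc_closed[OF R x i0] .
  then have j0_pos: "1 \<le> j0" using meet uR by (cases j0) auto
  have "dist_le E (anc j0 u) x i0" using dist_le_from_anc[OF xV i0] unfolding meet .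
  then have "dist_le E u x (j0 + i0)" by (rule dist_le_trans[OF dist_le_anc[OF u(1) j0]])
  then have "\<not> j0 + i0 \<le> k" using far dist_le_mono[of E u x "j0 + i0" k] by auto
  then have k_le: "k \<le> (j0 - 1) + i0" using j0_pos by linarith
  define Q1 where "Q1 = (\<lambda>j. anc j u) ` {1..<j0}"
  define Q2 where "Q2 = (\<lambda>i. anc i x) ` {1..i0}"
  have "card Q1 = j0 - 1"
    unfolding Q1_def using inj_on_subset[OF inj_on_anc[OF u(1)], of "{1..<j0}"] j0
    by (simp add: card_image subset_iff)
  moreover have "card Q2 = i0"
    unfolding Q2_def using inj_on_subset[OF inj_on_anc[OF xV], of "{1..i0}"] i0
    by (simp add: card_image subset_iff)
  moreover have "Q1 \<inter> Q2 = {}"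
  proof -
    have "anc j u \<noteq> anc i x" if "j < j0" "i \<le> i0" for i j using least[of i j] that i0 by simp
    then show ?thesis unfolding Q1_def Q2_def by auto
  qed
  ultimately have "k \<le> card (Q1 \<union> Q2)" using k_le by (simp add: Q1_def Q2_def card_Un_disjoint)
  moreover have "Q1 \<union> Q2 \<subseteq> R"
  proof -
    have "anc j u \<in> R" if "1 \<le> j" "j < j0" for j
    proof -
      have "anc j u = anc (j - 1) (p u)" using anc_Suc'[of "j - 1" u] that by simp
      moreover have "j - 1 \<le> d (p u)" using depth_parent[OF u] that j0 by simp
      ultimately show ?thesis using anc_closed[OF R pu] by simp
    qed
    then have "Q1 \<subseteq> R" unfolding Q1_def by auto
    moreover have "Q2 \<subseteq> R" unfolding Q2_def using anc_closed[OF R x] i0 by auto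
    ultimately show ?thesis by blast
  qed
  moreover have "x \<notin> Q1 \<union> Q2"
  proof -
    have "anc j u \<noteq> x" if "j < j0" for j using least[of 0 j] that by simp
    moreover have "anc i x \<noteq> x" if "1 \<le> i" "i \<le> i0" for i
    proof -
      have "d (anc i x) \<noteq> d x" using depth_anc[OF xV, of i] that i0 by simp
      then show ?thesis by auto
    qed
    ultimately show ?thesis unfolding Q1_def Q2_def by (smt (verit) Un_iff atLeastAtMost_iff
          atLeastLessThan_iff imageE)
  qed
  moreover have "2 \<le> deg E q" if "q \<in> Q1 \<union> Q2" for q
    using two_le_deg_on_path_to_meeting[OF u(1) xV i0 j0_pos j0 meet least] that
    unfolding Q1_def Q2_def by blast
  ultimately show ?thesis using that by blast
qed

definition descendants :: "'a \<Rightarrow> 'a set" where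
  "descendants u = {y \<in> V. d u \<le> d y \<and> anc (d y - d u) y = u}"

lemma dist_le_descendant: "y \<in> descendants u \<Longrightarrow> dist_le E u y (d y - d u)"
  unfolding descendants_def using dist_le_from_anc[of y "d y - d u"] by auto

lemma parent_notin_descendants:
  assumes "y \<in> V" "y \<noteq> r" "y \<notin> descendants u"
  shows "p y \<notin> descendants u"
proof
  assume "p y \<in> descendants u"
  then have "d u \<le> d (p y)" "anc (d (p y) - d u) (p y) = u" unfolding descendants_def by auto
  moreover have "d y = Suc (d (p y))" using depth_parent assms by blast
  ultimately show False
    using assms anc_Suc'[of "d (p y) - d u" y] unfolding descendants_def by (simp add: Suc_diff_le)
qed

lemma anc_mem_descendants:
  assumes "v \<in> V" "j \<le> i" "i \<le> d v"
  shows "anc j v \<in> descendants (anc i v)"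
proof -
  have "d (anc j v) - d (anc i v) = i - j" using depth_anc assms by simp
  moreover have "anc (i - j) (anc j v) = anc i v" using assms(2) by (simp flip: anc_add)
  ultimately show ?thesis unfolding descendants_def using anc_in depth_anc assms by auto
qed

text \<open>The \<open>k\<close> vertices of degree at least 2 are those on the path from \<open>v\<close> up to \<open>anc k v\<close>,
  excluding \<open>v\<close>.\<close>
lemma deepest_subtree:
  assumes v: "v \<in> V" and deepest: "\<And>y. y \<in> V \<Longrightarrow> d y \<le> d v" and k: "k < d v"
  shows "anc k v \<in> V" "anc k v \<noteq> r" "\<And>y. y \<in> descendants (anc k v) \<Longrightarrow> dist_le E (anc k v) y k"
    and "k + 1 \<le> card (descendants (anc k v))"
    and "k \<le> card {y \<in> descendants (anc k v). 2 \<le> deg E y}"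
proof -
  define u where "u = anc k v"
  show "u \<in> V" "u \<noteq> r" unfolding u_def using anc_in_and_depth[OF v, of k] k depth_root by auto
  show "dist_le E u y k" if "y \<in> descendants u" for y
  proof -
    have "d y - d u \<le> k" using deepest that depth_anc[OF v, of k] k unfolding u_def descendants_def
      by fastforce
    then show ?thesis by (rule dist_le_mono[OF dist_le_descendant[OF that]])
  qed
  define C where "C = (\<lambda>j. anc j v) ` {1..k}"
  have finite_desc: "finite (descendants u)" using finite_vertices unfolding descendants_def by simp
  have cC: "card C = k"
    unfolding C_def using inj_on_subset[OF inj_on_anc[OF v], of "{1..k}"] k
    by (simp add: card_image subset_iff)
  have C_sub: "C \<subseteq> {y \<in> descendants u. 2 \<le> deg E y}"
  proof
    fix y assume "y \<in> C"
    then obtain j where j: "1 \<le> j" "j \<le> k" "y = anc j v" unfolding C_def by auto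
    have "y \<noteq> r" using depth_anc[OF v, of j] j k depth_root by auto
    then have "2 \<le> deg E y"
      using anc_pred_child[OF v j(1)] anc_in[OF v, of j] j k by (intro two_le_deg_if_child) auto
    then show "y \<in> {y \<in> descendants u. 2 \<le> deg E y}"
      using anc_mem_descendants[OF v j(2)] k j unfolding u_def by auto
  qed
  then show "k \<le> card {y \<in> descendants u. 2 \<le> deg E y}"
    using cC card_mono[of "{y \<in> descendants u. 2 \<le> deg E y}" C] finite_desc by simp
  have "v \<notin> C"
  proof
    assume "v \<in> C"
    then obtain j where "1 \<le> j" "j \<le> k" "anc j v = v" unfolding C_def by auto
    then show False using depth_anc[OF v, of j] k by simp
  qed
  moreover have "v \<in> descendants u"
    using anc_mem_descendants[OF v, of 0 k] k unfolding u_def by simp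
  ultimately have "insert v C \<subseteq> descendants u" using C_sub by blast
  moreover have "card (insert v C) = k + 1" using cC \<open>v \<notin> C\<close> unfolding C_def by simp
  ultimately show "k + 1 \<le> card (descendants u)" using card_mono[OF finite_desc] by metis
qed

end

lemma deg_mono_edges: "F \<subseteq> E \<Longrightarrow> finite E \<Longrightarrow> deg F v \<le> deg E v"
  unfolding deg_def by (intro card_mono) auto

context rooted_tree
begin

lemma cut_descendants:
  assumes u: "u \<in> V" "u \<noteq> r"
  defines "R \<equiv> V - descendants u"
  shows "r \<in> R" and "\<And>y. y \<in> R \<Longrightarrow> y \<noteq> r \<Longrightarrow> p y \<in> R" and "p u \<in> R" and "u \<notin> R"
    and "card V = card R + card (descendants u)"
    and "card {y\<in>R. 2 \<le> deg E y} + card {y\<in>descendants u. 2 \<le> deg E y} \<le> card {y\<in>V. 2 \<le> deg E y}"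
proof -
  let ?S = "descendants u"
  have SV: "?S \<subseteq> V" and finite_S: "finite ?S"
    unfolding descendants_def using finite_vertices by auto
  show "r \<in> R" using u depth_root root_in unfolding R_def descendants_def by auto
  show "p y \<in> R" if "y \<in> R" "y \<noteq> r" for y
    using parent_notin_descendants[of y u] parent_in[of y] that unfolding R_def by blast
  show "p u \<in> R" using parent_in[OF u] depth_parent[OF u] unfolding R_def descendants_def by auto
  show "u \<notin> R" using u unfolding R_def descendants_def by simp
  show "card V = card R + card ?S"
    using card_Diff_subset[OF finite_S SV] card_mono[OF finite_vertices SV] unfolding R_def by simp
  let ?NR = "{y\<in>R. 2 \<le> deg E y}" and ?NS = "{y\<in>?S. 2 \<le> deg E y}"
  have "card (?NR \<union> ?NS) = card ?NR + card ?NS"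
    using finite_vertices finite_S unfolding R_def by (intro card_Un_disjoint) auto
  moreover have "?NR \<union> ?NS \<subseteq> {y\<in>V. 2 \<le> deg E y}" using SV unfolding R_def by blast
  then have "card (?NR \<union> ?NS) \<le> card {y\<in>V. 2 \<le> deg E y}"
    using finite_vertices by (intro card_mono) auto
  ultimately show "card ?NR + card ?NS \<le> card {y\<in>V. 2 \<le> deg E y}" by simp
qed

lemma far_from_cut_vertex:
  assumes u: "u \<in> V" "u \<noteq> r" and x: "x \<in> V - descendants u" and far: "\<not> dist_le E u x k"
  shows "k + 1 \<le> card (V - descendants u)" "k \<le> card {y\<in>V - descendants u. 2 \<le> deg E y}"
proof -
  let ?R = "V - descendants u"
  note cut = cut_descendants[OF u]
  obtain Q where Q: "Q \<subseteq> ?R" "k \<le> card Q" "x \<notin> Q" "\<And>q. q \<in> Q \<Longrightarrow> 2 \<le> deg E q"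
    using far_vertex_inner_vertices[OF u _ cut(2) x cut(3,4) far] by blast
  have finite_R: "finite ?R" using finite_vertices by simp
  have "Q \<subseteq> {y\<in>?R. 2 \<le> deg E y}" using Q by blast
  moreover have "finite {y\<in>?R. 2 \<le> deg E y}" using finite_vertices by simp
  ultimately have "card Q \<le> card {y\<in>?R. 2 \<le> deg E y}" by (rule card_mono[rotated])
  then show "k \<le> card {y\<in>?R. 2 \<le> deg E y}" using Q(2) by linarith
  have "card (insert x Q) = card Q + 1" using Q x finite_subset[OF Q(1) finite_R] by simp
  then show "k + 1 \<le> card ?R" using Q(1,2) x card_mono[OF finite_R, of "insert x Q"] by simp
qed

lemma dist_dom_set_insert_cut_vertex:
  assumes u: "u \<in> V" "\<And>y. y \<in> descendants u \<Longrightarrow> dist_le E u y k"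
    and D: "dist_dom_set (V - descendants u) (E' :: 'a set set) k D" and E': "E' \<subseteq> E"
  shows "dist_dom_set V E k (insert u D)"
  unfolding dist_dom_set_iff
proof
  show "insert u D \<subseteq> V" using D u(1) unfolding dist_dom_set_iff by blast
  show "\<forall>y\<in>V. \<exists>w\<in>insert u D. dist_le E w y k"
  proof
    fix y assume "y \<in> V"
    show "\<exists>w\<in>insert u D. dist_le E w y k"
    proof (cases "y \<in> descendants u")
      case False
      then obtain w where "w \<in> D" "dist_le E' w y k"
        using D \<open>y \<in> V\<close> unfolding dist_dom_set_iff by blast
      then show ?thesis using dist_le_mono_edges[OF _ E', of w y k] by blast
    qed (use u(2)[of y] in blast)
  qed
qed

end

text \<open>Induction on the order: cut off the subtree below the \<open>k\<close>-th ancestor \<open>u\<close> of a deepest vertex,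
  dominate it by \<open>u\<close>, and recurse on the rest.  If the rest is not already dominated by \<open>u\<close>, it has
  at least \<open>k + 1\<close> vertices, \<open>k\<close> of them of degree at least 2, which pays for the extra vertex \<open>u\<close>.\<close>
lemma small_dist_dom_set:
  assumes "rooted_tree V E r p d" and k: "1 \<le> k"
  shows "\<exists>D. dist_dom_set V E k D \<and> k * card D \<le> max k (card {v\<in>V. 2 \<le> deg E v})
    \<and> (k + 1) * card D \<le> max (k + 1) (card V)"
  using assms(1)
proof (induction "card V" arbitrary: V E rule: less_induct)
  case less
  interpret rooted_tree V E r p d by (fact less.prems)
  have "Max (d ` V) \<in> d ` V" using finite_vertices root_in by (intro Max_in) auto
  then obtain v where v: "v \<in> V" "d v = Max (d ` V)" by auto
  have deepest: "\<And>y. y \<in> V \<Longrightarrow> d y \<le> d v" using v(2) finite_vertices by simp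
  show ?case
  proof (cases "d v \<le> k")
    case True
    have "dist_le E r y k" if "y \<in> V" for y
    proof -
      have "dist_le E r y (d y)"
        using dist_le_from_anc[OF that order_refl] anc_depth[OF that] by simp
      moreover have "d y \<le> k" using deepest[OF that] True by simp
      ultimately show ?thesis by (rule dist_le_mono)
    qed
    then have "dist_dom_set V E k {r}" using root_in unfolding dist_dom_set_iff by simp
    then show ?thesis by (intro exI[of _ "{r}"]) simp
  next
    case False
    define u where "u = anc k v"
    define R where "R = V - descendants u"
    have "k < d v" using False by simp
    note sub_raw = deepest_subtree[OF v(1) deepest this]
    have sub: "u \<in> V" "u \<noteq> r" "\<And>y. y \<in> descendants u \<Longrightarrow> dist_le E u y k"
      "k + 1 \<le> card (descendants u)" "k \<le> card {y \<in> descendants u. 2 \<le> deg E y}"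
      using sub_raw unfolding u_def by blast+
    note cut = cut_descendants[OF sub(1,2), folded R_def]
    show ?thesis
    proof (cases "\<forall>x\<in>R. dist_le E u x k")
      case True
      then have "\<forall>y\<in>V. dist_le E u y k" using sub(3) unfolding R_def by blast
      then have "dist_dom_set V E k {u}" using sub(1) unfolding dist_dom_set_iff by simp
      then show ?thesis by (intro exI[of _ "{u}"]) simp
    next
      case False
      then obtain x where "x \<in> R" "\<not> dist_le E u x k" by blast
      note far = far_from_cut_vertex[OF sub(1,2) this[unfolded R_def], folded R_def]
      define ER where "ER = (\<lambda>v. {v, p v}) ` (R - {r})"
      have ER_sub: "ER \<subseteq> E" unfolding ER_def edges_eq R_def by auto
      have "card R < card V" using cut(5) sub(4) by simp
      from less.hyps[OF this restrict[OF _ cut(1,2), folded ER_def]]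
      obtain D where D: "dist_dom_set R ER k D"
        and bound_m: "k * card D \<le> max k (card {v\<in>R. 2 \<le> deg ER v})"
        and bound_n: "(k + 1) * card D \<le> max (k + 1) (card R)"
        unfolding R_def by blast
      have "card {y\<in>R. 2 \<le> deg ER y} \<le> card {y\<in>R. 2 \<le> deg E y}"
      proof (rule card_mono)
        show "{y\<in>R. 2 \<le> deg ER y} \<subseteq> {y\<in>R. 2 \<le> deg E y}"
          using deg_mono_edges[OF ER_sub finite_edges] by (auto intro: order.trans)
      qed (use finite_vertices in \<open>simp add: R_def\<close>)
      then have kD: "k * card D \<le> card {y\<in>R. 2 \<le> deg E y}" using bound_m far(2) by simp
      have "(k + 1) * card D \<le> card R" using bound_n far(1) by simp
      have cD: "card (insert u D) \<le> card D + 1" by (simp add: card_insert_le_m1)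
      have "k * card (insert u D) \<le> k * card D + k" using mult_le_mono2[OF cD, of k] by simp
      also have "\<dots> \<le> card {y\<in>V. 2 \<le> deg E y}" using kD sub(5) cut(6) by linarith
      finally have bound_m': "k * card (insert u D) \<le> card {y\<in>V. 2 \<le> deg E y}" .
      have "(k + 1) * card (insert u D) \<le> (k + 1) * card D + (k + 1)"
        using mult_le_mono2[OF cD, of "k + 1"] by simp
      also have "\<dots> \<le> card V" using \<open>(k + 1) * card D \<le> card R\<close> sub(4) cut(5) by linarith
      finally have bound_n': "(k + 1) * card (insert u D) \<le> card V" .
      have "dist_dom_set V E k (insert u D)"
        using dist_dom_set_insert_cut_vertex[OF sub(1,3) D[unfolded R_def] ER_sub] .
      then show ?thesis
        using bound_m' bound_n' by (intro exI[of _ "insert u D"]) (simp add: le_max_iff_disj)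
    qed
  qed
qed

lemma tree_gamma_k_bounds:
  assumes t: "tree V E" and k: "1 \<le> k" and g: "2 \<le> gamma_k V E k"
  shows "k * gamma_k V E k \<le> card {v\<in>V. 2 \<le> deg E v}" "(k + 1) * gamma_k V E k \<le> card V"
proof -
  obtain r where "r \<in> V" using t unfolding tree_def by blast
  then obtain p d where "rooted_tree V E r p d" using tree_rooted_tree[OF t] by blast
  from small_dist_dom_set[OF this k] obtain D where D: "dist_dom_set V E k D"
    and bound_m: "k * card D \<le> max k (card {v\<in>V. 2 \<le> deg E v})"
    and bound_n: "(k + 1) * card D \<le> max (k + 1) (card V)"
    by blast
  have "gamma_k V E k \<le> card D"
    using gamma_k_le_card[OF _ D] t unfolding tree_def graph_def by blast
  then have "k * gamma_k V E k \<le> k * card D" "(k + 1) * gamma_k V E k \<le> (k + 1) * card D"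
    by (rule mult_le_mono2)+
  moreover have "k * 2 \<le> k * gamma_k V E k" "(k + 1) * 2 \<le> (k + 1) * gamma_k V E k"
    using g by (rule mult_le_mono2)+
  then have "k < k * gamma_k V E k" "k + 1 < (k + 1) * gamma_k V E k" using k by simp_all
  ultimately have "k * gamma_k V E k \<le> max k (card {v\<in>V. 2 \<le> deg E v})" "k < k * gamma_k V E k"
    "(k + 1) * gamma_k V E k \<le> max (k + 1) (card V)" "k + 1 < (k + 1) * gamma_k V E k"
    using k bound_m bound_n by linarith+
  then show "k * gamma_k V E k \<le> card {v\<in>V. 2 \<le> deg E v}" "(k + 1) * gamma_k V E k \<le> card V"
    by (auto simp: le_max_iff_disj)
qed

section \<open>Products over degree sequences\<close>

lemma Bernoulli_inequality_nat: "(x::nat) ^ Suc j + Suc j * c * x ^ j \<le> (x + c) ^ Suc j"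
proof (induction j)
  case (Suc j)
  have "x ^ Suc (Suc j) + Suc (Suc j) * c * x ^ Suc j \<le> (x + c) * (x ^ Suc j + Suc j * c * x ^ j)"
    by (simp add: algebra_simps)
  also have "\<dots> \<le> (x + c) * (x + c) ^ Suc j" using Suc by (rule mult_le_mono2)
  finally show ?case by simp
qed simp

lemma mul_pow_pred_le:
  assumes x: "2 \<le> x" and y: "2 \<le> (y::nat)"
  shows "y * x ^ (x - 1) \<le> 2 * (x + y - 2) ^ (x - 1)"
    and "2 < x \<Longrightarrow> 2 < y \<Longrightarrow> y * x ^ (x - 1) < 2 * (x + y - 2) ^ (x - 1)"
proof -
  obtain j where j: "x = Suc (Suc j)" using x by (metis add_2_eq_Suc le_Suc_ex)
  obtain c where c: "y = c + 2" using y by (metis add.commute le_Suc_ex)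
  have xy: "x + y - 2 = x + c" and x1: "x - 1 = Suc j" using c j by simp_all
  have b: "x ^ Suc j + Suc j * c * x ^ j \<le> (x + c) ^ Suc j" by (rule Bernoulli_inequality_nat)
  have e: "y * x ^ Suc j = 2 * x ^ Suc j + c * x * x ^ j" using c by (simp add: algebra_simps)
  have "c * x * x ^ j \<le> 2 * (Suc j * c * x ^ j)" using j by (simp add: algebra_simps)
  then show "y * x ^ (x - 1) \<le> 2 * (x + y - 2) ^ (x - 1)" unfolding xy x1 using b e by linarith
  assume "2 < x" "2 < y"
  then have "c * x * x ^ j < 2 * (Suc j * c * x ^ j)" using j c by (simp add: algebra_simps)
  then show "y * x ^ (x - 1) < 2 * (x + y - 2) ^ (x - 1)" unfolding xy x1 using b e by linarith
qed

lemma pow_self_mul_pow_self_le: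
  assumes x: "2 \<le> x" and y: "2 \<le> (y::nat)"
  shows "x ^ x * y ^ y \<le> 4 * (x + y - 2) ^ (x + y - 2)"
    and "2 < x \<Longrightarrow> 2 < y \<Longrightarrow> x ^ x * y ^ y < 4 * (x + y - 2) ^ (x + y - 2)"
proof -
  let ?s = "x + y - 2"
  have split: "x ^ x * y ^ y = (y * x ^ (x - 1)) * (x * y ^ (y - 1))"
    using x y by (simp add: algebra_simps power_eq_if)
  have "?s ^ ?s = ?s ^ (x - 1) * ?s ^ (y - 1)" using x y by (simp add: power_add[symmetric])
  then have total: "4 * ?s ^ ?s = (2 * ?s ^ (x - 1)) * (2 * ?s ^ (y - 1))" by simp
  have A: "y * x ^ (x - 1) \<le> 2 * ?s ^ (x - 1)" using mul_pow_pred_le(1)[OF x y] .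
  have B: "x * y ^ (y - 1) \<le> 2 * ?s ^ (y - 1)"
    using mul_pow_pred_le(1)[OF y x] by (simp add: add.commute)
  show "x ^ x * y ^ y \<le> 4 * ?s ^ ?s" unfolding split total using A B by (rule mult_le_mono)
  assume "2 < x" "2 < y"
  then have "y * x ^ (x - 1) < 2 * ?s ^ (x - 1)" "x * y ^ (y - 1) < 2 * ?s ^ (y - 1)"
    using mul_pow_pred_le(2)[OF x y] mul_pow_pred_le(2)[OF y x] by (simp_all add: add.commute)
  then show "x ^ x * y ^ y < 4 * ?s ^ ?s" unfolding split total
    by (rule mult_strict_mono) (use x y in auto)
qed

lemma double_add_minus_two_le_mul:
  assumes x: "2 \<le> x" and y: "2 \<le> (y::nat)"
  shows "2 * (x + y - 2) \<le> x * y" and "2 < x \<Longrightarrow> 2 < y \<Longrightarrow> 2 * (x + y - 2) < x * y"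
proof -
  obtain a b where "x = a + 2" "y = b + 2" using x y by (metis add.commute le_Suc_ex)
  then show "2 * (x + y - 2) \<le> x * y" "2 < x \<Longrightarrow> 2 < y \<Longrightarrow> 2 * (x + y - 2) < x * y"
    by (simp_all add: algebra_simps)
qed

text \<open>For a degree sequence restricted to its non-leaves, \<open>excess f N\<close> is the number of leaves.\<close>
definition excess :: "('a \<Rightarrow> nat) \<Rightarrow> 'a set \<Rightarrow> nat" where
  "excess f N = sum f N + 2 - 2 * card N"

lemma excess_insert:
  assumes "finite F" "x \<notin> F" "\<forall>v\<in>F. 2 \<le> f v"
  shows "excess f (insert x F) = f x + excess f F - 2" "2 \<le> excess f F"
    and "(\<exists>y\<in>F. 2 < f y) \<Longrightarrow> 2 < excess f F"
proof -
  have "2 * card F \<le> sum f F" using sum_mono[of F "\<lambda>_. 2" f] assms by simp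
  then show "excess f (insert x F) = f x + excess f F - 2" "2 \<le> excess f F"
    unfolding excess_def using assms by simp_all
  assume "\<exists>y\<in>F. 2 < f y"
  then obtain y where y: "y \<in> F" "2 < f y" by blast
  have "2 * card (F - {y}) \<le> sum f (F - {y})" using sum_mono[of "F - {y}" "\<lambda>_. 2" f] assms by simp
  then show "2 < excess f F" using y assms sum.remove[of F y f] card_Diff_singleton[of y F]
    unfolding excess_def by (cases "card F") auto
qed

text \<open>Both product bounds are proved by merging: replacing two entries \<open>x, y \<ge> 2\<close> by \<open>2\<close> and \<open>x + y - 2\<close>
  does not increase \<open>\<Prod> f\<close> and does not decrease \<open>\<Prod> f\<^sup>f\<close>, strictly so if \<open>x, y > 2\<close>.\<close>
lemma pow2_mul_excess_le_prod:
  fixes f :: "'a \<Rightarrow> nat"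
  assumes "finite N" "N \<noteq> {}" "\<forall>v\<in>N. 2 \<le> f v"
  shows "2 ^ (card N - 1) * excess f N \<le> prod f N"
    and "\<exists>a\<in>N. \<exists>b\<in>N. a \<noteq> b \<and> 2 < f a \<and> 2 < f b \<Longrightarrow> 2 ^ (card N - 1) * excess f N < prod f N"
proof -
  have "2 ^ (card N - 1) * excess f N \<le> prod f N \<and>
    ((\<exists>a\<in>N. \<exists>b\<in>N. a \<noteq> b \<and> 2 < f a \<and> 2 < f b) \<longrightarrow> 2 ^ (card N - 1) * excess f N < prod f N)"
    using assms
  proof (induction N rule: finite_ne_induct)
    case (singleton x)
    then show ?case by (simp add: excess_def)
  next
    case (insert x F)
    have fx: "2 \<le> f x" and fF: "\<forall>v\<in>F. 2 \<le> f v" using insert.prems by auto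
    note ex = excess_insert[OF insert.hyps(1,3) fF]
    have p2: "(2::nat) ^ card F = 2 * 2 ^ (card F - 1)" using insert.hyps by (cases "card F") auto
    have merge: "2 ^ card F * (f x + excess f F - 2) \<le> 2 ^ (card F - 1) * (f x * excess f F)"
      using double_add_minus_two_le_mul(1)[OF fx ex(2)] p2 by (simp add: mult.assoc)
    have step: "2 ^ (card F - 1) * (f x * excess f F) \<le> f x * prod f F"
      using insert.IH fF by (simp add: algebra_simps)
    have strict: "2 ^ card F * (f x + excess f F - 2) < f x * prod f F"
      if "\<exists>a\<in>insert x F. \<exists>b\<in>insert x F. a \<noteq> b \<and> 2 < f a \<and> 2 < f b"
    proof -
      from that obtain a b where ab: "a \<in> insert x F" "b \<in> insert x F" "a \<noteq> b" "2 < f a" "2 < f b"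
        by blast
      show ?thesis
      proof (cases "a \<in> F \<and> b \<in> F")
        case True
        then have "2 ^ (card F - 1) * excess f F < prod f F" using insert.IH fF ab by blast
        then have "2 ^ (card F - 1) * (f x * excess f F) < f x * prod f F" using fx by simp
        then show ?thesis using merge by linarith
      next
        case False
        then have "2 < f x" "2 < excess f F" using ab ex(3) by auto
        then have "2 ^ card F * (f x + excess f F - 2) < 2 ^ (card F - 1) * (f x * excess f F)"
          using double_add_minus_two_le_mul(2)[OF fx ex(2)] p2 by (simp add: mult.assoc)
        then show ?thesis using step by linarith
      qed
    qed
    have "card (insert x F) - 1 = card F" "prod f (insert x F) = f x * prod f F"
      using insert.hyps by simp_all
    moreover have "2 ^ card F * (f x + excess f F - 2) \<le> f x * prod f F"
      using merge step by linarith
    ultimately show ?case unfolding ex(1) using strict by simp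
  qed
  then show "2 ^ (card N - 1) * excess f N \<le> prod f N"
    "\<exists>a\<in>N. \<exists>b\<in>N. a \<noteq> b \<and> 2 < f a \<and> 2 < f b \<Longrightarrow> 2 ^ (card N - 1) * excess f N < prod f N"
    by blast+
qed

lemma prod_pow_self_le_pow4_excess:
  fixes f :: "'a \<Rightarrow> nat"
  assumes "finite N" "N \<noteq> {}" "\<forall>v\<in>N. 2 \<le> f v"
  shows "(\<Prod>v\<in>N. f v ^ f v) \<le> 4 ^ (card N - 1) * excess f N ^ excess f N"
    and "\<exists>a\<in>N. \<exists>b\<in>N. a \<noteq> b \<and> 2 < f a \<and> 2 < f b \<Longrightarrow>
      (\<Prod>v\<in>N. f v ^ f v) < 4 ^ (card N - 1) * excess f N ^ excess f N"
proof -
  have "(\<Prod>v\<in>N. f v ^ f v) \<le> 4 ^ (card N - 1) * excess f N ^ excess f N \<and>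
    ((\<exists>a\<in>N. \<exists>b\<in>N. a \<noteq> b \<and> 2 < f a \<and> 2 < f b) \<longrightarrow>
      (\<Prod>v\<in>N. f v ^ f v) < 4 ^ (card N - 1) * excess f N ^ excess f N)"
    using assms
  proof (induction N rule: finite_ne_induct)
    case (singleton x)
    then show ?case by (simp add: excess_def)
  next
    case (insert x F)
    have fx: "2 \<le> f x" and fF: "\<forall>v\<in>F. 2 \<le> f v" using insert.prems by auto
    note ex = excess_insert[OF insert.hyps(1,3) fF]
    define t where "t = excess f F"
    have p4: "(4::nat) ^ card F = 4 * 4 ^ (card F - 1)" using insert.hyps by (cases "card F") auto
    have merge: "4 ^ (card F - 1) * (f x ^ f x * t ^ t) \<le> 4 ^ card F * (f x + t - 2) ^ (f x + t - 2)"
      using pow_self_mul_pow_self_le(1)[OF fx ex(2)] p4 unfolding t_def by (simp add: mult.assoc)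
    have step: "f x ^ f x * (\<Prod>v\<in>F. f v ^ f v) \<le> 4 ^ (card F - 1) * (f x ^ f x * t ^ t)"
      using insert.IH fF unfolding t_def by (simp add: algebra_simps)
    have strict: "f x ^ f x * (\<Prod>v\<in>F. f v ^ f v) < 4 ^ card F * (f x + t - 2) ^ (f x + t - 2)"
      if "\<exists>a\<in>insert x F. \<exists>b\<in>insert x F. a \<noteq> b \<and> 2 < f a \<and> 2 < f b"
    proof -
      from that obtain a b where ab: "a \<in> insert x F" "b \<in> insert x F" "a \<noteq> b" "2 < f a" "2 < f b"
        by blast
      show ?thesis
      proof (cases "a \<in> F \<and> b \<in> F")
        case True
        then have "(\<Prod>v\<in>F. f v ^ f v) < 4 ^ (card F - 1) * t ^ t"
          using insert.IH fF ab unfolding t_def by blast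
        then have "f x ^ f x * (\<Prod>v\<in>F. f v ^ f v) < 4 ^ (card F - 1) * (f x ^ f x * t ^ t)"
          using fx by (simp add: algebra_simps)
        then show ?thesis using merge by linarith
      next
        case False
        then have "2 < f x" "2 < t" using ab ex(3) unfolding t_def by auto
        then have "4 ^ (card F - 1) * (f x ^ f x * t ^ t) < 4 ^ card F * (f x + t - 2) ^ (f x + t - 2)"
          using pow_self_mul_pow_self_le(2)[OF fx ex(2)] p4 unfolding t_def by (simp add: mult.assoc)
        then show ?thesis using step by linarith
      qed
    qed
    have "card (insert x F) - 1 = card F"
      "(\<Prod>v\<in>insert x F. f v ^ f v) = f x ^ f x * (\<Prod>v\<in>F. f v ^ f v)"
      using insert.hyps by simp_all
    moreover have "f x ^ f x * (\<Prod>v\<in>F. f v ^ f v) \<le> 4 ^ card F * (f x + t - 2) ^ (f x + t - 2)"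
      using merge step by linarith
    ultimately show ?case unfolding ex(1) t_def[symmetric] using strict by simp
  qed
  then show "(\<Prod>v\<in>N. f v ^ f v) \<le> 4 ^ (card N - 1) * excess f N ^ excess f N"
    "\<exists>a\<in>N. \<exists>b\<in>N. a \<noteq> b \<and> 2 < f a \<and> 2 < f b \<Longrightarrow>
      (\<Prod>v\<in>N. f v ^ f v) < 4 ^ (card N - 1) * excess f N ^ excess f N"
    by blast+
qed

lemma pow2_mul_diff_mono:
  assumes "1 \<le> a" "a \<le> m" "m + 2 \<le> n"
  shows "2 ^ (a - 1) * (n - a) \<le> 2 ^ (m - 1) * (n - m)"
    and "a < m \<Longrightarrow> 2 ^ (a - 1) * (n - a) < 2 ^ (m - 1) * (n - m)"
proof -
  have "2 ^ (a - 1) * (n - a) \<le> 2 ^ (m - 1) * (n - m) \<and>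
    (a < m \<longrightarrow> 2 ^ (a - 1) * (n - a) < 2 ^ (m - 1) * (n - m))"
    using assms(2,3)
  proof (induction m)
    case (Suc m)
    show ?case
    proof (cases "a = Suc m")
      case False
      then have "a \<le> m" "1 \<le> m" using Suc.prems assms(1) by simp_all
      \<comment> \<open>one step: \<open>n - m < 2 (n - m - 1)\<close> because \<open>n - m \<ge> 3\<close>\<close>
      moreover have "2 ^ (m - 1) * (n - m) < 2 ^ (Suc m - 1) * (n - Suc m)"
        using Suc.prems \<open>1 \<le> m\<close> by (cases m) simp_all
      ultimately show ?thesis using Suc by auto
    qed simp
  qed (use assms(1) in simp)
  then show "2 ^ (a - 1) * (n - a) \<le> 2 ^ (m - 1) * (n - m)"
    "a < m \<Longrightarrow> 2 ^ (a - 1) * (n - a) < 2 ^ (m - 1) * (n - m)" by blast+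
qed

lemma four_mul_pow_self_less: "3 \<le> t \<Longrightarrow> 4 * (t - 1) ^ (t - 1) < (t::nat) ^ t"
proof -
  assume t: "3 \<le> t"
  define s where "s = t - 1"
  have ts: "t = Suc s" and s: "2 \<le> s" using t unfolding s_def by simp_all
  have "s ^ s + s * 1 * s ^ (s - 1) \<le> (s + 1) ^ s"
    using Bernoulli_inequality_nat[of s "s - 1" 1] s by simp
  moreover have "s * s ^ (s - 1) = s ^ s" using power_eq_if[of s s] s by simp
  ultimately have "2 * s ^ s \<le> t ^ s" using ts by simp
  have "4 * s ^ s < 6 * s ^ s" using s by simp
  also have "\<dots> \<le> (2 * t) * s ^ s" using t by (intro mult_le_mono1) simp
  also have "\<dots> = t * (2 * s ^ s)" by simp
  also have "\<dots> \<le> t * t ^ s" using \<open>2 * s ^ s \<le> t ^ s\<close> by (rule mult_le_mono2)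
  also have "\<dots> = t ^ t" using ts by simp
  finally show ?thesis unfolding s_def .
qed

lemma pow4_mul_pow_self_antimono:
  assumes "1 \<le> a" "a \<le> m" "m + 2 \<le> n"
  shows "4 ^ (m - 1) * (n - m) ^ (n - m) \<le> 4 ^ (a - 1) * (n - a) ^ (n - a)"
    and "a < m \<Longrightarrow> 4 ^ (m - 1) * (n - m) ^ (n - m) < 4 ^ (a - 1) * (n - a) ^ (n - a)"
proof -
  have "4 ^ (m - 1) * (n - m) ^ (n - m) \<le> 4 ^ (a - 1) * (n - a) ^ (n - a) \<and>
    (a < m \<longrightarrow> 4 ^ (m - 1) * (n - m) ^ (n - m) < 4 ^ (a - 1) * (n - a) ^ (n - a))"
    using assms(2,3)
  proof (induction m)
    case (Suc m)
    show ?case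
    proof (cases "a = Suc m")
      case False
      then have "a \<le> m" "1 \<le> m" using Suc.prems assms(1) by simp_all
      have "4 * (n - m - 1) ^ (n - m - 1) < (n - m) ^ (n - m)"
        using four_mul_pow_self_less[of "n - m"] Suc.prems by simp
      then have "4 ^ (m - 1) * (4 * (n - m - 1) ^ (n - m - 1)) < 4 ^ (m - 1) * (n - m) ^ (n - m)"
        by simp
      moreover have "(4::nat) ^ (Suc m - 1) = 4 ^ (m - 1) * 4" using \<open>1 \<le> m\<close> by (cases m) auto
      ultimately have "4 ^ (Suc m - 1) * (n - Suc m) ^ (n - Suc m) < 4 ^ (m - 1) * (n - m) ^ (n - m)"
        by (simp add: mult.assoc)
      then show ?thesis using Suc \<open>a \<le> m\<close> by auto
    qed simp
  qed (use assms(1) in simp)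
  then show "4 ^ (m - 1) * (n - m) ^ (n - m) \<le> 4 ^ (a - 1) * (n - a) ^ (n - a)"
    "a < m \<Longrightarrow> 4 ^ (m - 1) * (n - m) ^ (n - m) < 4 ^ (a - 1) * (n - a) ^ (n - a)" by blast+
qed

definition spider_degrees :: "'a set \<Rightarrow> ('a \<Rightarrow> nat) \<Rightarrow> nat \<Rightarrow> bool" where
  "spider_degrees V f D \<longleftrightarrow> (\<exists>c\<in>V. f c = D \<and> (\<forall>v\<in>V - {c}. f v \<le> 2))"

locale tree_degree_sequence =
  fixes V :: "'a set" and f :: "'a \<Rightarrow> nat"
  assumes finite_V: "finite V" and pos: "\<And>v. v \<in> V \<Longrightarrow> 1 \<le> f v"
    and sum_eq: "(\<Sum>v\<in>V. f v) = 2 * (card V - 1)"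
begin

definition nonleaves :: "'a set" where "nonleaves = {v\<in>V. 2 \<le> f v}"

lemma finite_nonleaves: "finite nonleaves"
  unfolding nonleaves_def using finite_V by simp

lemma leaves_eq_1: "v \<in> V - nonleaves \<Longrightarrow> f v = 1"
  using pos unfolding nonleaves_def by fastforce

lemma card_V_neq_1: "card V \<noteq> 1"
proof
  assume "card V = 1"
  then obtain v where "V = {v}" by (rule card_1_singletonE)
  then show False using sum_eq pos[of v] by simp
qed

lemma sum_nonleaves: "(\<Sum>v\<in>nonleaves. f v) = card V - 2 + card nonleaves"
proof -
  have sub: "nonleaves \<subseteq> V" unfolding nonleaves_def by blast
  have "(\<Sum>v\<in>V. f v) = (\<Sum>v\<in>V - nonleaves. f v) + (\<Sum>v\<in>nonleaves. f v)"
    using sum.subset_diff[OF sub finite_V] .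
  also have "(\<Sum>v\<in>V - nonleaves. f v) = card V - card nonleaves"
    using leaves_eq_1 card_Diff_subset[OF finite_nonleaves sub] by simp
  finally show ?thesis
    using sum_eq card_V_neq_1 card_mono[OF finite_V sub] by (cases "card V") auto
qed

lemma card_nonleaves_le:
  assumes "nonleaves \<noteq> {}"
  shows "card nonleaves + 2 \<le> card V"
proof -
  have "2 * card nonleaves \<le> (\<Sum>v\<in>nonleaves. f v)"
    using sum_mono[of nonleaves "\<lambda>_. 2" f] unfolding nonleaves_def by simp
  moreover have "card V \<noteq> 0" using assms finite_V unfolding nonleaves_def by auto
  ultimately show ?thesis using sum_nonleaves card_V_neq_1 by linarith
qed

lemma excess_nonleaves: "nonleaves \<noteq> {} \<Longrightarrow> excess f nonleaves = card V - card nonleaves"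
  using sum_nonleaves card_nonleaves_le unfolding excess_def by simp

lemma prod_eq_prod_nonleaves:
  assumes "h 1 = 1"
  shows "(\<Prod>v\<in>V. h (f v)) = (\<Prod>v\<in>nonleaves. h (f v))"
proof -
  have sub: "nonleaves \<subseteq> V" unfolding nonleaves_def by blast
  have "(\<Prod>v\<in>V - nonleaves. h (f v)) = 1" using leaves_eq_1 assms by simp
  then show ?thesis using prod.subset_diff[OF sub finite_V, of "\<lambda>v. h (f v)"] by simp
qed

lemma spider_degrees_if_one_big:
  assumes ne: "nonleaves \<noteq> {}" and one: "\<not> (\<exists>a\<in>nonleaves. \<exists>b\<in>nonleaves. a \<noteq> b \<and> 2 < f a \<and> 2 < f b)"
  shows "spider_degrees V f (card V - card nonleaves)"
proof -
  have "Max (f ` nonleaves) \<in> f ` nonleaves" using finite_nonleaves ne by (intro Max_in) auto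
  then obtain c where c: "c \<in> nonleaves" "f c = Max (f ` nonleaves)" by auto
  have others: "f v = 2" if "v \<in> nonleaves - {c}" for v
  proof -
    have "f v \<le> f c" using c finite_nonleaves that by simp
    moreover have "2 \<le> f v" using that unfolding nonleaves_def by simp
    moreover have "\<not> (2 < f v \<and> 2 < f c)" using one c(1) that by blast
    ultimately show ?thesis by linarith
  qed
  have "(\<Sum>v\<in>nonleaves - {c}. f v) = (\<Sum>v\<in>nonleaves - {c}. 2)"
    using others by (intro sum.cong) auto
  then have "(\<Sum>v\<in>nonleaves. f v) = f c + 2 * (card nonleaves - 1)"
    using sum.remove[OF finite_nonleaves c(1), of f] finite_nonleaves c(1) by simp
  moreover have "1 \<le> card nonleaves" using c(1) finite_nonleaves card_0_eq by fastforce
  ultimately have "f c = card V - card nonleaves"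
    using sum_nonleaves card_nonleaves_le[OF ne] by linarith
  moreover have "f v \<le> 2" if "v \<in> V - {c}" for v
    using that others leaves_eq_1 by (cases "v \<in> nonleaves") auto
  ultimately show ?thesis unfolding spider_degrees_def using c(1) nonleaves_def by blast
qed

lemma prod_spider_degrees:
  assumes "spider_degrees V f D" and h1: "h 1 = 1"
  shows "(\<Prod>v\<in>V. h (f v)) = h D * h 2 ^ (card V - 1 - D)"
proof -
  obtain c where c: "c \<in> V" "f c = D" and others: "\<forall>v\<in>V - {c}. f v \<le> 2"
    using assms(1) unfolding spider_degrees_def by blast
  define T where "T = {v\<in>V - {c}. f v = 2}"
  define L where "L = V - {c} - T"
  have L1: "f v = 1" if "v \<in> L" for v
  proof -
    have "1 \<le> f v" "f v \<le> 2" "f v \<noteq> 2" using pos[of v] others that unfolding L_def T_def by auto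
    then show ?thesis by linarith
  qed
  have fin: "finite T" "finite L" using finite_V unfolding T_def L_def by auto
  have disj: "T \<inter> L = {}" and split: "V - {c} = T \<union> L" unfolding L_def T_def by auto
  have "2 * (card V - 1) = D + (\<Sum>v\<in>V - {c}. f v)"
    using sum_eq sum.remove[OF finite_V c(1), of f] c by simp
  also have "(\<Sum>v\<in>V - {c}. f v) = (\<Sum>v\<in>T. f v) + (\<Sum>v\<in>L. f v)"
    unfolding split using sum.union_disjoint[OF fin disj] .
  also have "(\<Sum>v\<in>T. f v) = 2 * card T" unfolding T_def by simp
  also have "(\<Sum>v\<in>L. f v) = card L" using L1 by simp
  moreover have "card T + card L = card V - 1"
    using card_Un_disjoint[OF fin disj] split c(1) finite_V by (metis card_Diff_singleton)
  ultimately have "card T = card V - 1 - D" by linarith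
  have "(\<Prod>v\<in>V. h (f v)) = h D * (\<Prod>v\<in>V - {c}. h (f v))"
    using prod.remove[OF finite_V c(1), of "\<lambda>v. h (f v)"] c by simp
  also have "(\<Prod>v\<in>V - {c}. h (f v)) = (\<Prod>v\<in>T. h (f v)) * (\<Prod>v\<in>L. h (f v))"
    unfolding split using prod.union_disjoint[OF fin disj] .
  also have "(\<Prod>v\<in>T. h (f v)) = h 2 ^ card T" unfolding T_def by simp
  also have "(\<Prod>v\<in>L. h (f v)) = 1" using L1 h1 by simp
  finally show ?thesis using \<open>card T = card V - 1 - D\<close> by simp
qed

lemma nonleaves_ge_2: "\<forall>v\<in>nonleaves. 2 \<le> f v"
  unfolding nonleaves_def by simp

lemma prod_square_bound:
  assumes a: "1 \<le> a" "a \<le> card nonleaves"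
  shows "4 ^ (a - 1) * (card V - a) ^ 2 \<le> (\<Prod>v\<in>V. f v ^ 2)"
    and "(\<Prod>v\<in>V. f v ^ 2) = 4 ^ (a - 1) * (card V - a) ^ 2 \<longleftrightarrow> spider_degrees V f (card V - a)"
proof -
  have ne: "nonleaves \<noteq> {}" using a by auto
  note m2 = card_nonleaves_le[OF ne]
  define X where "X = 2 ^ (a - 1) * (card V - a)"
  define Y where "Y = (\<Prod>v\<in>nonleaves. f v)"
  have Y2: "(\<Prod>v\<in>V. f v ^ 2) = Y ^ 2"
    using prod_eq_prod_nonleaves[of "\<lambda>x. x ^ 2"] unfolding Y_def by (simp add: prod_power_distrib)
  have four: "(4::nat) ^ k = (2 ^ k) ^ 2" for k
    by (simp flip: power_mult add: mult.commute[of k 2] power_mult)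
  have X2: "4 ^ (a - 1) * (card V - a) ^ 2 = X ^ 2"
    unfolding X_def by (simp only: power_mult_distrib four)
  note P = pow2_mul_excess_le_prod[OF finite_nonleaves ne nonleaves_ge_2, folded Y_def,
      unfolded excess_nonleaves[OF ne]]
  note M = pow2_mul_diff_mono[OF a m2, folded X_def]
  have XY: "X \<le> Y" using P(1) M(1) by linarith
  then show "4 ^ (a - 1) * (card V - a) ^ 2 \<le> (\<Prod>v\<in>V. f v ^ 2)"
    unfolding X2 Y2 by (rule power_mono) simp
  show "(\<Prod>v\<in>V. f v ^ 2) = 4 ^ (a - 1) * (card V - a) ^ 2 \<longleftrightarrow> spider_degrees V f (card V - a)"
  proof
    assume "(\<Prod>v\<in>V. f v ^ 2) = 4 ^ (a - 1) * (card V - a) ^ 2"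
    then have "Y ^ 2 = X ^ 2" unfolding X2 Y2 .
    then have "Y = X" using XY power2_nat_le_eq_le[of Y X] by simp
    have "\<not> a < card nonleaves"
    proof
      assume "a < card nonleaves"
      then show False using M(2) P(1) \<open>Y = X\<close> by linarith
    qed
    moreover have "\<not> (\<exists>x\<in>nonleaves. \<exists>y\<in>nonleaves. x \<noteq> y \<and> 2 < f x \<and> 2 < f y)"
    proof
      assume "\<exists>x\<in>nonleaves. \<exists>y\<in>nonleaves. x \<noteq> y \<and> 2 < f x \<and> 2 < f y"
      then show False using M(1) P(2) \<open>Y = X\<close> by linarith
    qed
    ultimately show "spider_degrees V f (card V - a)"
      using spider_degrees_if_one_big[OF ne] a(2) by simp
  next
    assume "spider_degrees V f (card V - a)"
    moreover have "card V - 1 - (card V - a) = a - 1" using a m2 by simp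
    ultimately show "(\<Prod>v\<in>V. f v ^ 2) = 4 ^ (a - 1) * (card V - a) ^ 2"
      using prod_spider_degrees[of "card V - a" "\<lambda>x. x ^ 2"] by simp
  qed
qed

lemma prod_pow_self_bound:
  assumes a: "1 \<le> a" "a \<le> card nonleaves"
  shows "(\<Prod>v\<in>V. f v ^ f v) \<le> 4 ^ (a - 1) * (card V - a) ^ (card V - a)"
    and "(\<Prod>v\<in>V. f v ^ f v) = 4 ^ (a - 1) * (card V - a) ^ (card V - a)
      \<longleftrightarrow> spider_degrees V f (card V - a)"
proof -
  have ne: "nonleaves \<noteq> {}" using a by auto
  note m2 = card_nonleaves_le[OF ne]
  have Z: "(\<Prod>v\<in>V. f v ^ f v) = (\<Prod>v\<in>nonleaves. f v ^ f v)"
    using prod_eq_prod_nonleaves[of "\<lambda>x. x ^ x"] by simp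
  note P = prod_pow_self_le_pow4_excess[OF finite_nonleaves ne nonleaves_ge_2, folded Z,
      unfolded excess_nonleaves[OF ne]]
  note M = pow4_mul_pow_self_antimono[OF a m2]
  show "(\<Prod>v\<in>V. f v ^ f v) \<le> 4 ^ (a - 1) * (card V - a) ^ (card V - a)" using P(1) M(1) by linarith
  show "(\<Prod>v\<in>V. f v ^ f v) = 4 ^ (a - 1) * (card V - a) ^ (card V - a)
      \<longleftrightarrow> spider_degrees V f (card V - a)"
  proof
    assume eq: "(\<Prod>v\<in>V. f v ^ f v) = 4 ^ (a - 1) * (card V - a) ^ (card V - a)"
    have "\<not> a < card nonleaves"
    proof
      assume "a < card nonleaves"
      then show False using M(2) P(1) eq by linarith
    qed
    moreover have "\<not> (\<exists>x\<in>nonleaves. \<exists>y\<in>nonleaves. x \<noteq> y \<and> 2 < f x \<and> 2 < f y)"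
    proof
      assume "\<exists>x\<in>nonleaves. \<exists>y\<in>nonleaves. x \<noteq> y \<and> 2 < f x \<and> 2 < f y"
      then show False using M(1) P(2) eq by linarith
    qed
    ultimately show "spider_degrees V f (card V - a)"
      using spider_degrees_if_one_big[OF ne] a(2) by simp
  next
    assume "spider_degrees V f (card V - a)"
    moreover have "card V - 1 - (card V - a) = a - 1" using a m2 by simp
    ultimately show "(\<Prod>v\<in>V. f v ^ f v) = 4 ^ (a - 1) * (card V - a) ^ (card V - a)"
      using prod_spider_degrees[of "card V - a" "\<lambda>x. x ^ x"] by (simp add: mult.commute)
  qed
qed

end

section \<open>The starlike tree \<open>T\<^sub>n\<^sub>,\<^sub>k\<^sub>,\<^sub>s\<close>\<close>

definition T_path_len :: "nat \<Rightarrow> nat \<Rightarrow> nat \<Rightarrow> nat" where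
  "T_path_len k s i = (if i = 1 then k else if i \<le> s then k + 1 else 1)"

definition T_parent :: "nat \<times> nat \<Rightarrow> nat \<times> nat" where
  "T_parent w = (if snd w = 1 then (0, 0) else (fst w, snd w - 1))"

lemma TV_iff:
  assumes "1 \<le> k" "1 \<le> s"
  shows "(i, j) \<in> TV n k s \<longleftrightarrow>
    i = 0 \<and> j = 0 \<or> 1 \<le> i \<and> i \<le> s + (n - (k + 1) * s) \<and> 1 \<le> j \<and> j \<le> T_path_len k s i"
proof -
  have "Suc 0 \<le> s + (n - (s + k * s))" using assms by simp
  then show ?thesis unfolding TV_def T_path_len_def
    using assms by (cases "i = 1"; cases "i \<le> s") auto
qed

lemma finite_TV: "finite (TV n k s)"
proof -
  have "TV n k s \<subseteq> {0..s + (n - (k + 1) * s) + 1} \<times> {0..k + 1}" unfolding TV_def by auto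
  then show ?thesis by (rule finite_subset) simp
qed

lemma TE_eq:
  assumes k: "1 \<le> k" and s: "1 \<le> s"
  shows "TE n k s = (\<lambda>w. {w, T_parent w}) ` (TV n k s - {(0, 0)})"
proof
  let ?q = "s + (n - (k + 1) * s)"
  show "TE n k s \<subseteq> (\<lambda>w. {w, T_parent w}) ` (TV n k s - {(0, 0)})"
  proof
    fix e assume "e \<in> TE n k s"
    then consider (centre) i where "e = {(0, 0), (i, 1)}" "1 \<le> i" "i \<le> ?q"
      | (path) i j where "e = {(i, j), (i, j + 1)}" "1 \<le> j" "(i, j + 1) \<in> TV n k s"
      unfolding TE_def by blast
    then show "e \<in> (\<lambda>w. {w, T_parent w}) ` (TV n k s - {(0, 0)})"
    proof cases
      case centre
      have "(i, 1) \<in> TV n k s" using TV_iff[OF k s] centre k unfolding T_path_len_def by auto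
      moreover have "e = {(i, 1), T_parent (i, 1)}" using centre unfolding T_parent_def by auto
      ultimately show ?thesis by (intro image_eqI[where x = "(i, 1)"]) auto
    next
      case path
      have "e = {(i, j + 1), T_parent (i, j + 1)}" using path unfolding T_parent_def by auto
      then show ?thesis using path by (intro image_eqI[where x = "(i, j + 1)"]) auto
    qed
  qed
  show "(\<lambda>w. {w, T_parent w}) ` (TV n k s - {(0, 0)}) \<subseteq> TE n k s"
  proof
    fix e assume "e \<in> (\<lambda>w. {w, T_parent w}) ` (TV n k s - {(0, 0)})"
    then obtain w where "w \<in> TV n k s - {(0, 0)}" "e = {w, T_parent w}" by blast
    moreover obtain i j where "w = (i, j)" by (cases w)
    ultimately have w: "(i, j) \<in> TV n k s" "(i, j) \<noteq> (0, 0)" "e = {(i, j), T_parent (i, j)}"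
      by auto
    then have ij: "1 \<le> i" "i \<le> ?q" "1 \<le> j" "j \<le> T_path_len k s i" using TV_iff[OF k s] by auto
    show "e \<in> TE n k s"
    proof (cases "j = 1")
      case True
      then have "e = {(0, 0), (i, 1)}" using w unfolding T_parent_def by auto
      then have "e \<in> {{(0, 0), (i, 1)} | i. 1 \<le> i \<and> i \<le> ?q}" using ij by blast
      then show ?thesis unfolding TE_def by (rule UnI1)
    next
      case False
      have e: "e = {(i, j - 1), (i, j - 1 + 1)}" using w ij False unfolding T_parent_def by auto
      have "(i, j - 1) \<in> TV n k s" using TV_iff[OF k s] ij False by auto
      moreover have "(i, j - 1 + 1) \<in> TV n k s" using w(1) False ij by simp
      moreover have "1 \<le> j - 1" using False ij by simp
      ultimately have "e \<in> {{(i, j), (i, j + 1)} | i j. 1 \<le> j \<and> (i, j) \<in> TV n k s \<and> (i, j + 1) \<in> TV n k s}"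
        unfolding e by blast
      then show ?thesis unfolding TE_def by (rule UnI2)
    qed
  qed
qed

lemma rooted_tree_T:
  assumes k: "1 \<le> k" and s: "1 \<le> s"
  shows "rooted_tree (TV n k s) (TE n k s) (0, 0) T_parent snd"
proof
  show "finite (TV n k s)" by (rule finite_TV)
  show "(0, 0) \<in> TV n k s" unfolding TV_def by simp
  show "TE n k s = (\<lambda>v. {v, T_parent v}) ` (TV n k s - {(0, 0)})" by (rule TE_eq[OF k s])
  fix w assume w: "w \<in> TV n k s" "w \<noteq> (0, 0)"
  obtain i j where ij: "w = (i, j)" by (cases w)
  then have c: "1 \<le> i" "i \<le> s + (n - (k + 1) * s)" "1 \<le> j" "j \<le> T_path_len k s i"
    using w TV_iff[OF k s] by auto
  show "T_parent w \<in> TV n k s"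
  proof (cases "j = 1")
    case True
    then show ?thesis using ij unfolding T_parent_def by (simp add: TV_def)
  next
    case False
    then have "(i, j - 1) \<in> TV n k s" using c TV_iff[OF k s] by auto
    then show ?thesis using ij False unfolding T_parent_def by simp
  qed
  show "snd w = Suc (snd (T_parent w))" using c ij unfolding T_parent_def by auto
qed simp

lemma rooted_tree_graph_iso:
  assumes A: "rooted_tree V E r p d" and B: "rooted_tree W F r' p' d'"
    and f: "bij_betw f V W" and root: "f r = r'"
    and parent: "\<And>y. y \<in> V \<Longrightarrow> y \<noteq> r \<Longrightarrow> f (p y) = p' (f y)"
  shows "graph_iso V E W F"
  unfolding graph_iso_def
proof (intro exI[of _ f] conjI ballI)
  interpret A: rooted_tree V E r p d by (fact A)
  interpret B: rooted_tree W F r' p' d' by (fact B)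
  show "bij_betw f V W" by (fact f)
  have inj: "inj_on f V" and onto: "f ` V = W" using f unfolding bij_betw_def by auto
  fix u v assume u: "u \<in> V" and v: "v \<in> V"
  show "{u, v} \<in> E \<longleftrightarrow> {f u, f v} \<in> F"
  proof
    assume "{u, v} \<in> E"
    then obtain y where y: "y \<in> V" "y \<noteq> r" "{u, v} = {y, p y}" using A.edges_eq by blast
    have "f y \<noteq> r'" using y root inj A.root_in by (metis inj_on_eq_iff)
    moreover have "{f u, f v} = {f y, p' (f y)}" using y parent by (auto simp: doubleton_eq_iff)
    ultimately show "{f u, f v} \<in> F" using B.edges_eq y(1) onto by blast
  next
    assume "{f u, f v} \<in> F"
    then obtain w where w: "w \<in> W - {r'}" "{f u, f v} = {w, p' w}" using B.edges_eq by blast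
    then obtain y where y: "y \<in> V" "w = f y" using onto by auto
    then have yr: "y \<noteq> r" using w root by auto
    have "{f u, f v} = {f y, f (p y)}" using w y parent yr by simp
    then have "u = y \<and> v = p y \<or> u = p y \<and> v = y"
      using inj u v y A.parent_in[OF y(1) yr] by (auto simp: doubleton_eq_iff dest: inj_onD)
    then show "{u, v} \<in> E" using A.edges_eq y yr by blast
  qed
qed

context
  fixes n k s :: nat
  assumes k: "1 \<le> k" and s: "1 \<le> s"
begin

interpretation T: rooted_tree "TV n k s" "TE n k s" "(0, 0)" T_parent snd
  by (rule rooted_tree_T[OF k s])

lemma deg_T_centre: "deg (TE n k s) (0, 0) = s + (n - (k + 1) * s)"
proof -
  let ?q = "s + (n - (k + 1) * s)"
  have "T.incident (0, 0) = (\<lambda>i. (i, 1::nat)) ` {1..?q}"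
  proof
    show "T.incident (0, 0) \<subseteq> (\<lambda>i. (i, 1::nat)) ` {1..?q}"
    proof
      fix y assume y: "y \<in> T.incident (0, 0)"
      obtain i j where ij: "y = (i, j)" by (cases y)
      have "(i, j) \<in> TV n k s" "(i, j) \<noteq> (0, 0)" "T_parent (i, j) = (0, 0)"
        using y ij unfolding T.incident_def by auto
      then have "1 \<le> i" "i \<le> ?q" "j = 1"
        using TV_iff[OF k s] unfolding T_parent_def by (auto split: if_splits)
      then show "y \<in> (\<lambda>i. (i, 1::nat)) ` {1..?q}" using ij by auto
    qed
    show "(\<lambda>i. (i, 1::nat)) ` {1..?q} \<subseteq> T.incident (0, 0)"
    proof
      fix y assume "y \<in> (\<lambda>i. (i, 1::nat)) ` {1..?q}"
      then obtain i where i: "y = (i, 1)" "1 \<le> i" "i \<le> ?q" by auto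
      have "1 \<le> T_path_len k s i" using k unfolding T_path_len_def by auto
      then have "(i, 1) \<in> TV n k s" using TV_iff[OF k s] i by auto
      then show "y \<in> T.incident (0, 0)" using i unfolding T.incident_def T_parent_def by auto
    qed
  qed
  then show ?thesis using T.deg_eq_card_incident by (simp add: card_image inj_on_def)
qed

lemma deg_T_le_2:
  assumes w: "w \<in> TV n k s" "w \<noteq> (0, 0)"
  shows "deg (TE n k s) w \<le> 2"
proof -
  obtain i j where ij: "w = (i, j)" by (cases w)
  have "T.incident w \<subseteq> {(i, j), (i, j + 1)}"
  proof
    fix y assume y: "y \<in> T.incident w"
    then have "y \<in> TV n k s" "y \<noteq> (0, 0)" "y = w \<or> T_parent y = w"
      unfolding T.incident_def by auto
    moreover obtain a b where ab: "y = (a, b)" by (cases y)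
    ultimately have "1 \<le> b" "y = w \<or> T_parent y = w" using TV_iff[OF k s] by auto
    then show "y \<in> {(i, j), (i, j + 1)}"
      using ij ab w(2) unfolding T_parent_def by (auto split: if_splits)
  qed
  then have "card (T.incident w) \<le> card {(i, j), (i, j + 1)}" by (rule card_mono[rotated]) simp
  then show ?thesis using T.deg_eq_card_incident by simp
qed

end

lemma spider_degrees_if_iso_T:
  assumes k: "1 \<le> k" and s: "1 \<le> s" and ns: "(k + 1) * s \<le> n" and g: "graph V E"
    and iso: "graph_iso V E (TV n k s) (TE n k s)"
  shows "spider_degrees V (deg E) (n - k * s)"
proof -
  interpret T: rooted_tree "TV n k s" "TE n k s" "(0, 0)" T_parent snd by (rule rooted_tree_T[OF k s])
  obtain f where f: "bij_betw f V (TV n k s)"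
    and pres: "\<forall>u\<in>V. \<forall>v\<in>V. {u, v} \<in> E \<longleftrightarrow> {f u, f v} \<in> TE n k s"
    using iso unfolding graph_iso_def by blast
  have deg_f: "\<And>u. u \<in> V \<Longrightarrow> deg E u = deg (TE n k s) (f u)"
    using graph_iso_deg[OF g T.graph f pres] .
  obtain c where c: "c \<in> V" "f c = (0, 0)"
    using f T.root_in unfolding bij_betw_def by (metis imageE)
  have "deg E c = n - k * s" using deg_f[OF c(1)] c(2) deg_T_centre[OF k s] ns by simp
  moreover have "deg E v \<le> 2" if v: "v \<in> V - {c}" for v
  proof -
    have "f v \<in> TV n k s" using v f unfolding bij_betw_def by auto
    moreover have "f v \<noteq> f c" using v c(1) f unfolding bij_betw_def inj_on_def by blast
    ultimately show ?thesis using deg_f v deg_T_le_2[OF k s] c(2) by simp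
  qed
  ultimately show ?thesis unfolding spider_degrees_def using c(1) by blast
qed

text \<open>A spider rooted at its centre: all other degrees are at most 2, so the tree is the union of paths
  (legs) leaving the root, one for each child of the root.\<close>
locale spider = rooted_tree +
  assumes deg_le_2: "\<And>v. v \<in> V \<Longrightarrow> v \<noteq> r \<Longrightarrow> deg E v \<le> 2"
begin

definition heads :: "'a set" where "heads = {y \<in> V - {r}. p y = r}"
definition head :: "'a \<Rightarrow> 'a" where "head y = anc (d y - 1) y"
definition leg :: "'a \<Rightarrow> 'a set" where "leg b = {y \<in> V - {r}. head y = b}"
definition len :: "'a \<Rightarrow> nat" where "len b = Max (d ` leg b)"

text \<open>The vertex at depth \<open>x\<close> on the leg with head \<open>b\<close>; depth 0 is the root.\<close>
definition leg_at :: "'a \<Rightarrow> nat \<Rightarrow> 'a" where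
  "leg_at b x = (if x = 0 then r else (THE y. y \<in> leg b \<and> d y = x))"

lemma head_in:
  assumes y: "y \<in> V" "y \<noteq> r"
  shows "head y \<in> heads" "d (head y) = 1"
proof -
  have dy: "d y \<ge> 1" using depth_pos[OF y] by simp
  have a: "head y \<in> V" "d (head y) = 1"
    using anc_in_and_depth[OF y(1), of "d y - 1"] dy unfolding head_def by auto
  then have "head y \<noteq> r" using depth_root by auto
  moreover have "p (head y) = r"
    using anc_depth[OF y(1)] dy anc_Suc[of "d y - 1" y] unfolding head_def by simp
  ultimately show "head y \<in> heads" "d (head y) = 1" using a unfolding heads_def by auto
qed

lemma head_anc:
  assumes y: "y \<in> V" "y \<noteq> r" and j: "j < d y"
  shows "head (anc j y) = head y"
proof -
  have "d (anc j y) = d y - j" using depth_anc[OF y(1)] j by simp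
  then have "head (anc j y) = anc (d y - j - 1) (anc j y)" unfolding head_def by simp
  also have "\<dots> = anc (d y - j - 1 + j) y" by (simp only: anc_add)
  also have "d y - j - 1 + j = d y - 1" using j by simp
  finally show ?thesis unfolding head_def .
qed

lemma at_most_one_child:
  assumes w: "w \<in> V" "w \<noteq> r" and y: "y \<in> V" "y \<noteq> r" "p y = w" and z: "z \<in> V" "z \<noteq> r" "p z = w"
  shows "y = z"
proof (rule ccontr)
  assume "y \<noteq> z"
  moreover have "w \<noteq> y" "w \<noteq> z" using parent_neq y z by auto
  ultimately have "card {w, y, z} = 3" by simp
  moreover have "{w, y, z} \<subseteq> incident w" using w y z unfolding incident_def by auto
  ultimately have "3 \<le> deg E w" using card_mono[OF finite_incident] deg_eq_card_incident by metis
  then show False using deg_le_2[OF w] by simp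
qed

lemma leg_depth_unique:
  "y \<in> V - {r} \<Longrightarrow> z \<in> V - {r} \<Longrightarrow> head y = head z \<Longrightarrow> d y = d z \<Longrightarrow> y = z"
proof (induction "d y" arbitrary: y z rule: less_induct)
  case less
  have y: "y \<in> V" "y \<noteq> r" and z: "z \<in> V" "z \<noteq> r" using less.prems by auto
  show ?case
  proof (cases "d y = 1")
    case True
    then show ?thesis using less.prems unfolding head_def by simp
  next
    case False
    then have dy: "d y \<ge> 2" using depth_pos[OF y] by simp
    have py: "p y \<in> V" "p y \<noteq> r" using parent_in[OF y] depth_parent[OF y] dy depth_root by auto
    have pz: "p z \<in> V" "p z \<noteq> r"
      using parent_in[OF z] depth_parent[OF z] dy depth_root less.prems(4) by auto
    have "head (p y) = head y" using head_anc[OF y, of 1] dy anc_Suc[of 0 y] by simp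
    moreover have "head (p z) = head z"
      using head_anc[OF z, of 1] dy less.prems(4) anc_Suc[of 0 z] by simp
    moreover have "d (p y) = d (p z)"
      using depth_parent[OF y] depth_parent[OF z] less.prems(4) by simp
    moreover have "d (p y) < d y" using depth_parent[OF y] by simp
    ultimately have "p y = p z" using less.hyps[of "p y" "p z"] py pz less.prems(3) by simp
    then show ?thesis using at_most_one_child[OF py y] z by simp
  qed
qed

lemma finite_leg: "finite (leg b)" unfolding leg_def using finite_vertices by simp

lemma head_in_leg: "b \<in> heads \<Longrightarrow> b \<in> leg b"
proof -
  assume b: "b \<in> heads"
  then have bV: "b \<in> V" "b \<noteq> r" "p b = r" unfolding heads_def by auto
  then have "d b = 1" using depth_parent depth_root by simp
  then show ?thesis unfolding leg_def head_def using bV by simp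
qed

lemma depth_in_leg: "y \<in> leg b \<Longrightarrow> 1 \<le> d y \<and> d y \<le> len b"
proof -
  assume y: "y \<in> leg b"
  then have "d y \<ge> 1" unfolding leg_def using depth_pos by fastforce
  moreover have "d y \<le> len b" unfolding len_def using y finite_leg by simp
  ultimately show ?thesis by simp
qed

lemma len_ge_1: "b \<in> heads \<Longrightarrow> len b \<ge> 1" using depth_in_leg head_in_leg by fastforce

lemma exists_depth_in_leg:
  assumes b: "b \<in> heads" and x: "1 \<le> x" "x \<le> len b"
  shows "\<exists>y\<in>leg b. d y = x"
proof -
  have "len b \<in> d ` leg b" unfolding len_def
    using head_in_leg[OF b] finite_leg by (intro Max_in) auto
  then obtain y0 where y0: "y0 \<in> leg b" "d y0 = len b" by auto
  then have y0V: "y0 \<in> V" "y0 \<noteq> r" "head y0 = b" unfolding leg_def by auto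
  define y where "y = anc (len b - x) y0"
  have "y \<in> V" "d y = x" using anc_in_and_depth[OF y0V(1), of "len b - x"] y0 x y_def by auto
  moreover have "head y = b" using head_anc[OF y0V(1,2), of "len b - x"] y0 x y0V y_def by simp
  moreover have "y \<noteq> r" using \<open>d y = x\<close> x depth_root by auto
  ultimately show ?thesis unfolding leg_def by auto
qed

lemma leg_at_in_leg:
  assumes b: "b \<in> heads" and x: "1 \<le> x" "x \<le> len b"
  shows "leg_at b x \<in> leg b" "d (leg_at b x) = x"
proof -
  obtain y where y: "y \<in> leg b" "d y = x" using exists_depth_in_leg[OF b x] by blast
  have u: "\<And>z. z \<in> leg b \<and> d z = x \<Longrightarrow> z = y" using leg_depth_unique y unfolding leg_def by auto
  have "(THE z. z \<in> leg b \<and> d z = x) = y" by (rule the_equality) (use y u in blast)+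
  then have "leg_at b x = y" unfolding leg_at_def using x by simp
  then show "leg_at b x \<in> leg b" "d (leg_at b x) = x" using y by auto
qed

lemma leg_at_depth:
  assumes y: "y \<in> leg b"
  shows "leg_at b (d y) = y"
proof -
  have u: "\<And>z. z \<in> leg b \<and> d z = d y \<Longrightarrow> z = y" using leg_depth_unique y unfolding leg_def by auto
  have "d y \<ge> 1" using depth_in_leg[OF y] by simp
  moreover have "(THE z. z \<in> leg b \<and> d z = d y) = y" by (rule the_equality) (use y u in blast)+
  ultimately show ?thesis unfolding leg_at_def by simp
qed

lemma leg_at_in: "b \<in> heads \<Longrightarrow> x \<le> len b \<Longrightarrow> leg_at b x \<in> V"
  using leg_at_in_leg root_in unfolding leg_def leg_at_def by (cases "x = 0") auto

lemma depth_leg_at: "b \<in> heads \<Longrightarrow> x \<le> len b \<Longrightarrow> d (leg_at b x) = x"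
  using leg_at_in_leg depth_root unfolding leg_at_def by (cases "x = 0") auto

lemma anc_leg_at:
  assumes b: "b \<in> heads" and xx: "x' \<le> x" "x \<le> len b"
  shows "anc (x - x') (leg_at b x) = leg_at b x'"
proof (cases "x' = 0")
  case True
  have "anc (d (leg_at b x)) (leg_at b x) = r" using anc_depth leg_at_in b xx by simp
  then show ?thesis using True depth_leg_at b xx unfolding leg_at_def by simp
next
  case False
  have y: "leg_at b x \<in> leg b" "d (leg_at b x) = x" using leg_at_in_leg[OF b] False xx by auto
  then have yV: "leg_at b x \<in> V" "leg_at b x \<noteq> r" unfolding leg_def by auto
  define z where "z = anc (x - x') (leg_at b x)"
  have "z \<in> V" "d z = x'" using anc_in_and_depth[OF yV(1), of "x - x'"] y xx z_def by auto
  moreover have "head z = b"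
    using head_anc[OF yV, of "x - x'"] y False xx z_def unfolding leg_def by auto
  moreover have "z \<noteq> r" using \<open>d z = x'\<close> False depth_root by auto
  ultimately have "z \<in> leg b" "d z = x'" unfolding leg_def by auto
  then show ?thesis using leg_at_depth z_def by metis
qed

lemma dist_le_leg_at:
  assumes b: "b \<in> heads" and xx: "x' \<le> x" "x \<le> len b"
  shows "dist_le E (leg_at b x') (leg_at b x) (x - x')"
    and "dist_le E (leg_at b x) (leg_at b x') (x - x')"
proof -
  have "dist_le E (anc (x - x') (leg_at b x)) (leg_at b x) (x - x')"
    by (rule dist_le_from_anc) (use leg_at_in[OF b xx(2)] depth_leg_at[OF b xx(2)] in auto)
  then show "dist_le E (leg_at b x') (leg_at b x) (x - x')" using anc_leg_at[OF b xx] by simp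
  then show "dist_le E (leg_at b x) (leg_at b x') (x - x')" by (rule dist_le_sym)
qed

lemma leg_at_0: "leg_at b 0 = r" unfolding leg_at_def by simp

lemma dist_le_leg_at_cross:
  assumes b: "b \<in> heads" "b' \<in> heads" and x: "x \<le> len b" and y: "y \<le> len b'"
  shows "dist_le E (leg_at b x) (leg_at b' y) (x + y)"
proof -
  have a: "dist_le E (leg_at b x) r x" using dist_le_leg_at(2)[OF b(1) _ x, of 0] leg_at_0 by simp
  have c: "dist_le E r (leg_at b' y) y" using dist_le_leg_at(1)[OF b(2) _ y, of 0] leg_at_0 by simp
  show ?thesis by (rule dist_le_trans[OF a c])
qed

lemma vertex_on_leg:
  "y \<in> V \<Longrightarrow> y \<noteq> r \<Longrightarrow>
    head y \<in> heads \<and> 1 \<le> d y \<and> d y \<le> len (head y) \<and> y = leg_at (head y) (d y)"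
proof -
  assume y: "y \<in> V" "y \<noteq> r"
  then have f: "y \<in> leg (head y)" unfolding leg_def by simp
  show ?thesis using head_in[OF y] depth_in_leg[OF f] leg_at_depth[OF f] by simp
qed

lemma card_leg: "b \<in> heads \<Longrightarrow> card (leg b) = len b"
proof -
  assume b: "b \<in> heads"
  have "inj_on d (leg b)" using leg_depth_unique unfolding leg_def by (auto intro: inj_onI)
  moreover have "d ` leg b = {1..len b}"
  proof
    show "d ` leg b \<subseteq> {1..len b}" using depth_in_leg by auto
    show "{1..len b} \<subseteq> d ` leg b" using exists_depth_in_leg[OF b] by force
  qed
  ultimately show ?thesis by (metis card_atLeastAtMost card_image diff_Suc_1)
qed

lemma finite_heads: "finite heads" unfolding heads_def using finite_vertices by simp

lemma sum_len: "(\<Sum>b\<in>heads. len b) = card V - 1"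
proof -
  have "V - {r} = (\<Union>b\<in>heads. leg b)" using vertex_on_leg head_in unfolding leg_def by blast
  moreover have "card (\<Union>b\<in>heads. leg b) = (\<Sum>b\<in>heads. card (leg b))"
    by (rule card_UN_disjoint) (use finite_heads finite_leg in \<open>auto simp: leg_def\<close>)
  ultimately have "card (V - {r}) = (\<Sum>b\<in>heads. len b)" using card_leg by simp
  then show ?thesis using finite_vertices root_in by simp
qed

lemma card_heads: "card heads = deg E r"
proof -
  have "incident r = heads" unfolding incident_def heads_def by auto
  then show ?thesis using deg_eq_card_incident by simp
qed

lemma dist_le_leg_at_close:
  assumes b: "b \<in> heads" and x: "x \<le> len b" "x' \<le> len b" and close: "x \<le> x' + k" "x' \<le> x + k"
  shows "dist_le E (leg_at b x) (leg_at b x') k"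
proof (cases "x \<le> x'")
  case True
  then show ?thesis using dist_le_leg_at(1)[OF b True x(2)] close by (elim dist_le_mono) simp
next
  case False
  then have "x' \<le> x" by simp
  from dist_le_leg_at(2)[OF b this x(1)] show ?thesis using close by (elim dist_le_mono) simp
qed

end

lemma period_cover:
  fixes k x l :: nat
  assumes "k < x" "x \<le> l"
  obtains t where "t < (l + k) div (2 * k + 1)"
    "x \<le> min l ((2 * k + 1) * (t + 1)) + k" "min l ((2 * k + 1) * (t + 1)) \<le> x + k"
proof -
  define K where "K = 2 * k + 1"
  define t where "t = (x - k - 1) div K"
  have lower: "K * t \<le> x - k - 1" unfolding t_def by (simp add: mult.commute)
  have upper: "x - k - 1 < K * (t + 1)"
  proof -
    have "x - k - 1 = K * t + (x - k - 1) mod K" unfolding t_def by simp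
    moreover have "(x - k - 1) mod K < K" unfolding K_def by simp
    ultimately show ?thesis by (simp add: algebra_simps)
  qed
  have "K * (t + 1) \<le> l + k" using lower assms unfolding K_def by (simp add: algebra_simps)
  then have "(K * (t + 1)) div K \<le> (l + k) div K" by (rule div_le_mono)
  moreover have "0 < K" unfolding K_def by simp
  ultimately have "t < (l + k) div K" by simp
  moreover have "x \<le> min l (K * (t + 1)) + k" "min l (K * (t + 1)) \<le> x + k"
    using lower upper assms unfolding K_def by (auto simp: algebra_simps)
  ultimately show ?thesis using that unfolding K_def by blast
qed

text \<open>The arithmetic core of the leg analysis: \<open>l b - 1\<close> is the number of non-head vertices of leg \<open>b\<close>,
  and \<open>g\<close> is at most the size of the periodic dominating set.  Each long leg pays \<open>k\<close> for its first
  dominating point and \<open>2k + 1\<close> for every further one, which leaves no room for more than one point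
  per long leg.\<close>
lemma leg_length_budget:
  fixes l :: "'b \<Rightarrow> nat" and k g :: nat
  assumes fin: "finite B" and k: "1 \<le> k" and g: "1 \<le> g"
    and total: "(\<Sum>b\<in>B. l b - 1) = k * g - 1"
    and cover: "g \<le> 1 + (\<Sum>b\<in>{b\<in>B. k < l b}. (l b + k) div (2 * k + 1))"
  shows "card {b\<in>B. k < l b} = g - 1" and "\<And>b. b \<in> B \<Longrightarrow> k < l b \<Longrightarrow> l b \<le> 2 * k"
    and "(\<Sum>b\<in>{b\<in>B. l b \<le> k}. l b - 1) + (\<Sum>b\<in>{b\<in>B. k < l b}. l b - 1 - k) = k - 1"
proof -
  define Lg Sh where "Lg = {b\<in>B. k < l b}" and "Sh = {b\<in>B. l b \<le> k}"
  define q where "q b = (l b + k) div (2 * k + 1)" for b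
  have fins: "finite Lg" "finite Sh" using fin unfolding Lg_def Sh_def by simp_all
  have "(\<Sum>b\<in>B. l b - 1) = (\<Sum>b\<in>Sh. l b - 1) + (\<Sum>b\<in>Lg. l b - 1)"
  proof -
    have "B = Sh \<union> Lg" "Sh \<inter> Lg = {}" unfolding Lg_def Sh_def by auto
    then show ?thesis using sum.union_disjoint[OF fins(2,1)] by simp
  qed
  then have split: "(\<Sum>b\<in>Sh. l b - 1) + (\<Sum>b\<in>Lg. l b - 1) = k * g - 1" using total by simp
  have q: "1 \<le> q b" "k * q b + (k + 1) * (q b - 1) \<le> l b - 1" if "b \<in> Lg" for b
  proof -
    have "2 * k + 1 \<le> l b + k" using that unfolding Lg_def by simp
    then show "1 \<le> q b" unfolding q_def by (simp add: Suc_le_eq div_greater_zero_iff)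
    have "q b * (2 * k + 1) \<le> l b + k" unfolding q_def by (rule div_times_less_eq_dividend)
    then show "k * q b + (k + 1) * (q b - 1) \<le> l b - 1"
      using \<open>1 \<le> q b\<close> by (cases "q b") (auto simp: algebra_simps)
  qed
  define X Y where "X = (\<Sum>b\<in>Lg. q b)" and "Y = (\<Sum>b\<in>Lg. q b - 1)"
  have "k * X + (k + 1) * Y = (\<Sum>b\<in>Lg. k * q b + (k + 1) * (q b - 1))"
    unfolding X_def Y_def by (simp add: sum_distrib_left sum.distrib)
  also have "\<dots> \<le> (\<Sum>b\<in>Lg. l b - 1)" using q(2) by (rule sum_mono)
  finally have XY: "k * X + (k + 1) * Y + (\<Sum>b\<in>Sh. l b - 1) \<le> k * g - 1" using split by linarith
  have "g - 1 \<le> X" using cover unfolding X_def Lg_def q_def by simp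
  moreover have "X < g"
  proof (rule ccontr)
    assume "\<not> X < g"
    then have "k * g \<le> k * X" by simp
    moreover have "0 < k * g" using k g by simp
    ultimately show False using XY by linarith
  qed
  ultimately have X: "X = g - 1" by simp
  have "(k + 1) * Y \<le> k - 1"
  proof -
    have "k * X = k * g - k" using X by (simp add: algebra_simps)
    moreover have "k \<le> k * g" using g by simp
    ultimately show ?thesis using XY k by linarith
  qed
  then have "Y = 0" by (cases Y) simp_all
  then have q1: "q b = 1" if "b \<in> Lg" for b using that q(1) fins(1) unfolding Y_def by fastforce
  show card_Lg: "card {b\<in>B. k < l b} = g - 1" using X q1 unfolding X_def Lg_def by simp
  have long_k: "k \<le> l b - 1" if "b \<in> Lg" for b using q(2)[OF that] q1[OF that] by simp
  have "(\<Sum>b\<in>Lg. l b - 1 - k) = (\<Sum>b\<in>Lg. l b - 1) - (\<Sum>b\<in>Lg. k)"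
    using long_k by (intro sum_subtractf_nat) auto
  moreover have "(\<Sum>b\<in>Lg. k) \<le> (\<Sum>b\<in>Lg. l b - 1)" using long_k by (intro sum_mono) auto
  moreover have "(\<Sum>b\<in>Lg. k) = k * g - k" using card_Lg unfolding Lg_def by (simp add: algebra_simps)
  moreover have "k \<le> k * g" using g by simp
  ultimately show rest: "(\<Sum>b\<in>{b\<in>B. l b \<le> k}. l b - 1) + (\<Sum>b\<in>{b\<in>B. k < l b}. l b - 1 - k) = k - 1"
    using split k unfolding Lg_def Sh_def by linarith
  show "l b \<le> 2 * k" if "b \<in> B" "k < l b" for b
  proof -
    have "l b - 1 - k \<le> (\<Sum>b\<in>Lg. l b - 1 - k)"
      using that fins(1) unfolding Lg_def by (intro member_le_sum) auto
    then show ?thesis using rest k unfolding Lg_def Sh_def by linarith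
  qed
qed

lemma exists_leg_indexing:
  fixes l :: "'b \<Rightarrow> nat"
  assumes fin: "finite B" and k: "2 \<le> k" and b0: "b0 \<in> B" "l b0 = k"
    and others: "\<And>b. b \<in> B - {b0} \<Longrightarrow> l b = 1 \<or> l b = k + 1"
    and long: "card {b\<in>B. l b = k + 1} = g - 1" and total: "card B = g + q" and g: "1 \<le> g"
  obtains idx where "bij_betw idx B {1..g + q}" "\<And>b. b \<in> B \<Longrightarrow> T_path_len k g (idx b) = l b"
proof -
  define Lg Sh where "Lg = {b\<in>B. l b = k + 1}" and "Sh = {b\<in>B. l b = 1}"
  have B: "B = {b0} \<union> Lg \<union> Sh" using b0 others unfolding Lg_def Sh_def by auto
  have disj: "b0 \<notin> Lg" "b0 \<notin> Sh" "Lg \<inter> Sh = {}" using b0 k unfolding Lg_def Sh_def by auto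
  have fins: "finite Lg" "finite Sh" using fin unfolding Lg_def Sh_def by simp_all
  have "card B = 1 + card Lg + card Sh"
    using B disj fins by (simp add: card_Un_disjoint)
  then have "card Sh = card {g + 1..g + q}" using long total g unfolding Lg_def by simp
  then obtain h2 where h2: "bij_betw h2 Sh {g + 1..g + q}"
    using finite_same_card_bij[OF fins(2)] by blast
  have "card Lg = card {2..g}" using long unfolding Lg_def by simp
  then obtain h1 where h1: "bij_betw h1 Lg {2..g}" using finite_same_card_bij[OF fins(1)] by blast
  define idx where "idx b = (if b = b0 then 1 else if b \<in> Lg then h1 b else h2 b)" for b
  have "bij_betw idx Lg {2..g}"
    using h1 disj by (subst bij_betw_cong[of _ _ h1]) (auto simp: idx_def)
  moreover have "bij_betw idx Sh {g + 1..g + q}"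
    using h2 disj by (subst bij_betw_cong[of _ _ h2]) (auto simp: idx_def)
  moreover have "bij_betw idx {b0} {1}" by (simp add: idx_def)
  ultimately have "bij_betw idx ({b0} \<union> Lg \<union> Sh) ({1} \<union> {2..g} \<union> {g + 1..g + q})"
    using g by (intro bij_betw_combine) auto
  moreover have "{1} \<union> {2..g} \<union> {g + 1..g + q} = {1..g + q}" using g by auto
  ultimately have bij: "bij_betw idx B {1..g + q}" using B by simp
  have "T_path_len k g (idx b) = l b" if b: "b \<in> B" for b
  proof -
    consider "b = b0" | "b \<in> Lg" "b \<noteq> b0" | "b \<in> Sh" "b \<notin> Lg" "b \<noteq> b0" using B b by blast
    then show ?thesis
    proof cases
      case 2
      then have "idx b \<in> {2..g}" using h1 unfolding idx_def bij_betw_def by auto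
      then show ?thesis using 2 unfolding T_path_len_def Lg_def by auto
    next
      case 3
      then have "idx b \<in> {g + 1..g + q}" using h2 unfolding idx_def bij_betw_def by auto
      then show ?thesis using 3 g unfolding T_path_len_def Sh_def by auto
    qed (use b0 in \<open>simp add: idx_def T_path_len_def\<close>)
  qed
  with bij show ?thesis using that by blast
qed

context spider
begin

text \<open>Cover each leg longer than \<open>k\<close> by points spaced \<open>2k + 1\<close> apart; the root covers the rest.\<close>
lemma periodic_dist_dom_set:
  "\<exists>D. dist_dom_set V E k D \<and>
    card D \<le> 1 + (\<Sum>b\<in>{b\<in>heads. k < len b}. (len b + k) div (2 * k + 1))"
proof -
  define L where "L = {b\<in>heads. k < len b}"
  define P where "P b t = leg_at b (min (len b) ((2 * k + 1) * (t + 1)))" for b t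
  define D where "D = insert r (\<Union>b\<in>L. P b ` {..<(len b + k) div (2 * k + 1)})"
  have fin_L: "finite L" unfolding L_def using finite_heads by simp
  have "D \<subseteq> V" unfolding D_def P_def L_def using root_in leg_at_in by auto
  moreover have "\<exists>u\<in>D. dist_le E u y k" if y: "y \<in> V" for y
  proof (cases "y = r")
    case True
    have "r \<in> D" unfolding D_def by simp
    then show ?thesis using dist_le_refl[of E r k] True by blast
  next
    case False
    define b x where "b = head y" and "x = d y"
    have b: "b \<in> heads" "1 \<le> x" "x \<le> len b" "y = leg_at b x"
      using vertex_on_leg[OF y False] unfolding b_def x_def by blast+
    show ?thesis
    proof (cases "x \<le> k")
      case True
      then have "dist_le E r y k"
        using dist_le_leg_at_close[OF b(1) _ b(3), of 0 k] b(4) leg_at_0 by simp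
      moreover have "r \<in> D" unfolding D_def by simp
      ultimately show ?thesis by blast
    next
      case False
      then obtain t where t: "t < (len b + k) div (2 * k + 1)"
        "x \<le> min (len b) ((2 * k + 1) * (t + 1)) + k" "min (len b) ((2 * k + 1) * (t + 1)) \<le> x + k"
        using period_cover[of k x "len b"] b(3) by auto
      have "P b t \<in> D" unfolding D_def L_def using b(1,3) False t(1) by auto
      moreover have "dist_le E (P b t) y k"
        unfolding P_def b(4) by (rule dist_le_leg_at_close) (use b t in auto)
      ultimately show ?thesis by blast
    qed
  qed
  moreover have "card D \<le> 1 + (\<Sum>b\<in>L. (len b + k) div (2 * k + 1))"
  proof -
    have "card (\<Union>b\<in>L. P b ` {..<(len b + k) div (2 * k + 1)})
        \<le> (\<Sum>b\<in>L. card (P b ` {..<(len b + k) div (2 * k + 1)}))"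
      by (rule card_UN_le[OF fin_L])
    also have "\<dots> \<le> (\<Sum>b\<in>L. (len b + k) div (2 * k + 1))"
      by (intro sum_mono) (metis card_image_le card_lessThan finite_lessThan)
    finally show ?thesis unfolding D_def using card_insert_le_m1 fin_L
      by (simp add: card_insert_if)
  qed
  ultimately show ?thesis unfolding dist_dom_set_iff L_def by blast
qed

lemma long_legs_dist_dom_set:
  assumes L: "L \<subseteq> heads" "\<And>b. b \<in> L \<Longrightarrow> k < len b \<and> len b \<le> 2 * k"
    and b0: "b0 \<in> L" and short: "\<And>b. b \<in> heads - L \<Longrightarrow> len b + len b0 \<le> 2 * k"
  shows "\<exists>D. dist_dom_set V E k D \<and> card D \<le> card L"
proof -
  define D where "D = (\<lambda>b. leg_at b (len b - k)) ` L"
  have b0_len: "k < len b0" "len b0 \<le> 2 * k" using L(2)[OF b0] by auto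
  have "D \<subseteq> V" unfolding D_def using L leg_at_in by auto
  moreover have "\<exists>u\<in>D. dist_le E u y k" if y: "y \<in> V" for y
  proof (cases "y = r")
    case True
    have "dist_le E (leg_at b0 (len b0 - k)) (leg_at b0 0) k"
      by (rule dist_le_leg_at_close) (use L(1) b0 b0_len in auto)
    then show ?thesis using True leg_at_0 b0 unfolding D_def by auto
  next
    case False
    define b x where "b = head y" and "x = d y"
    have b: "b \<in> heads" "1 \<le> x" "x \<le> len b" "y = leg_at b x"
      using vertex_on_leg[OF y False] unfolding b_def x_def by blast+
    show ?thesis
    proof (cases "b \<in> L")
      case True
      have "dist_le E (leg_at b (len b - k)) (leg_at b x) k"
        by (rule dist_le_leg_at_close) (use L(2)[OF True] b in auto)
      then show ?thesis using True b(4) unfolding D_def by auto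
    next
      case False
      have "dist_le E (leg_at b0 (len b0 - k)) (leg_at b x) (len b0 - k + x)"
        by (rule dist_le_leg_at_cross) (use L(1) b0 b in auto)
      moreover have "len b0 - k + x \<le> k" using short[of b] False b b0_len by simp
      ultimately have "dist_le E (leg_at b0 (len b0 - k)) y k"
        using b(4) by (simp add: dist_le_mono)
      then show ?thesis using b0 unfolding D_def by auto
    qed
  qed
  moreover have "card D \<le> card L" unfolding D_def using finite_subset[OF L(1) finite_heads]
    by (rule card_image_le)
  ultimately show ?thesis unfolding dist_dom_set_iff by blast
qed

text \<open>These are the leg lengths of \<open>T\<^sub>n\<^sub>,\<^sub>k\<^sub>,\<^sub>g\<close>.  If no leg had length \<open>k\<close>, the vertices at distance \<open>k\<close>
  from the ends of the \<open>g - 1\<close> long legs would already dominate the whole spider.\<close>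
lemma leg_lengths:
  assumes k: "2 \<le> k" and g: "3 \<le> g" and deg_root: "deg E r = card V - k * g"
    and kn: "(k + 1) * g \<le> card V" and gmin: "\<And>D. dist_dom_set V E k D \<Longrightarrow> g \<le> card D"
  obtains b0 where "b0 \<in> heads" "len b0 = k" "\<And>b. b \<in> heads - {b0} \<Longrightarrow> len b = 1 \<or> len b = k + 1"
    "card {b\<in>heads. len b = k + 1} = g - 1"
proof -
  define Lg Sh where "Lg = {b\<in>heads. k < len b}" and "Sh = {b\<in>heads. len b \<le> k}"
  have fins: "finite Lg" "finite Sh" using finite_heads unfolding Lg_def Sh_def by simp_all
  have "(\<Sum>b\<in>heads. len b - 1) = (\<Sum>b\<in>heads. len b) - (\<Sum>b\<in>heads. 1)"
    using len_ge_1 by (intro sum_subtractf_nat) auto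
  also have "\<dots> = k * g - 1"
    using sum_len card_heads deg_root kn g by (simp add: algebra_simps)
  finally have total: "(\<Sum>b\<in>heads. len b - 1) = k * g - 1" .
  obtain D where "dist_dom_set V E k D" "card D \<le> 1 + (\<Sum>b\<in>Lg. (len b + k) div (2 * k + 1))"
    using periodic_dist_dom_set unfolding Lg_def by blast
  then have "g \<le> 1 + (\<Sum>b\<in>Lg. (len b + k) div (2 * k + 1))" using gmin by fastforce
  note budget = leg_length_budget[OF finite_heads _ _ total this[unfolded Lg_def], folded Lg_def Sh_def]
  have card_Lg: "card Lg = g - 1" and Lg_le: "\<And>b. b \<in> Lg \<Longrightarrow> len b \<le> 2 * k"
    and rest: "(\<Sum>b\<in>Sh. len b - 1) + (\<Sum>b\<in>Lg. len b - 1 - k) = k - 1"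
    using budget k g unfolding Lg_def by auto
  show ?thesis
  proof (cases "\<exists>b0\<in>heads. len b0 = k")
    case True
    then obtain b0 where b0: "b0 \<in> heads" "len b0 = k" by blast
    then have "b0 \<in> Sh" unfolding Sh_def by simp
    then have "(\<Sum>b\<in>Sh - {b0}. len b - 1) + (\<Sum>b\<in>Lg. len b - 1 - k) = 0"
      using rest b0(2) sum.remove[OF fins(2), of b0 "\<lambda>b. len b - 1"] by simp
    then have short1: "\<And>b. b \<in> Sh - {b0} \<Longrightarrow> len b - 1 = 0"
      and long1: "\<And>b. b \<in> Lg \<Longrightarrow> len b - 1 - k = 0" using fins by auto
    have eq: "{b\<in>heads. len b = k + 1} = Lg" using long1 unfolding Lg_def by force
    show ?thesis
    proof (rule that[OF b0])
      show "len b = 1 \<or> len b = k + 1" if "b \<in> heads - {b0}" for b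
        using short1[of b] long1[of b] len_ge_1[of b] that unfolding Lg_def Sh_def by force
      show "card {b\<in>heads. len b = k + 1} = g - 1" using eq card_Lg by simp
    qed
  next
    case False
    have "Lg \<noteq> {}" using card_Lg g by auto
    then have "Min (len ` Lg) \<in> len ` Lg" using fins(1) by (intro Min_in) auto
    then obtain b0 where b0: "b0 \<in> Lg" "len b0 = Min (len ` Lg)" by auto
    have b0_min: "len b0 \<le> len b" if "b \<in> Lg" for b using b0(2) fins(1) that by simp
    have "\<not> Lg \<subseteq> {b0}" using card_mono[of "{b0}" Lg] card_Lg g by auto
    then obtain b1 where b1: "b1 \<in> Lg" "b1 \<noteq> b0" by blast
    have "len b + len b0 \<le> 2 * k" if b: "b \<in> heads - Lg" for b
    proof -
      have "b \<in> Sh" "len b \<noteq> k" using b False unfolding Lg_def Sh_def by auto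
      then have "len b - 1 \<le> (\<Sum>b\<in>Sh. len b - 1)" "len b \<le> k - 1"
        using fins(2) by (auto intro: member_le_sum simp: Sh_def)
      moreover have "(\<Sum>b\<in>{b0, b1}. len b - 1 - k) \<le> (\<Sum>b\<in>Lg. len b - 1 - k)"
        using b0(1) b1(1) fins(1) by (intro sum_mono2) auto
      moreover have "(\<Sum>b\<in>{b0, b1}. len b - 1 - k) = (len b0 - 1 - k) + (len b1 - 1 - k)"
        using b1(2) by simp
      moreover have "k < len b0" "len b0 \<le> len b1" using b0(1) b1(1) b0_min unfolding Lg_def by auto
      moreover have "1 \<le> len b" using len_ge_1 b by simp
      ultimately show ?thesis using rest by linarith
    qed
    moreover have "Lg \<subseteq> heads" "\<And>b. b \<in> Lg \<Longrightarrow> k < len b \<and> len b \<le> 2 * k"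
      using Lg_le unfolding Lg_def by auto
    ultimately obtain D where D: "dist_dom_set V E k D" "card D \<le> card Lg"
      using long_legs_dist_dom_set[of Lg k b0] b0(1) by blast
    then show ?thesis using gmin[OF D(1)] card_Lg g by linarith
  qed
qed

definition T_coord :: "('a \<Rightarrow> nat) \<Rightarrow> 'a \<Rightarrow> nat \<times> nat" where
  "T_coord idx y = (if y = r then (0, 0) else (idx (head y), d y))"

lemma inj_on_T_coord:
  assumes "inj_on idx heads"
  shows "inj_on (T_coord idx) V"
proof (rule inj_onI)
  fix y z assume y: "y \<in> V" and z: "z \<in> V" and e: "T_coord idx y = T_coord idx z"
  show "y = z"
  proof (cases "y = r")
    case True
    then show ?thesis using e depth_pos[OF z] unfolding T_coord_def by (auto split: if_splits)
  next
    case False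
    then have zr: "z \<noteq> r" using e depth_pos[OF y] unfolding T_coord_def by (auto split: if_splits)
    then have "idx (head y) = idx (head z)" "d y = d z" using e False unfolding T_coord_def by auto
    then have "head y = head z"
      using assms head_in[OF y False] head_in[OF z zr] by (auto dest: inj_onD)
    then show ?thesis using leg_depth_unique y z False zr \<open>d y = d z\<close> by auto
  qed
qed

lemma T_coord_image:
  assumes k: "1 \<le> k" and g: "1 \<le> g" and idx: "idx ` heads = {1..g + (n - (k + 1) * g)}"
    and idx_len: "\<And>b. b \<in> heads \<Longrightarrow> T_path_len k g (idx b) = len b"
  shows "T_coord idx ` V = TV n k g"
proof
  note TV = TV_iff[OF k g, of _ _ n]
  show "T_coord idx ` V \<subseteq> TV n k g"
  proof
    fix w assume "w \<in> T_coord idx ` V"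
    then obtain y where y: "y \<in> V" "w = T_coord idx y" by auto
    show "w \<in> TV n k g"
    proof (cases "y = r")
      case True
      then show ?thesis using y TV unfolding T_coord_def by simp
    next
      case False
      have "head y \<in> heads" "1 \<le> d y" "d y \<le> len (head y)"
        using vertex_on_leg[OF y(1) False] by auto
      then show ?thesis using idx idx_len y False TV unfolding T_coord_def by auto
    qed
  qed
  show "TV n k g \<subseteq> T_coord idx ` V"
  proof
    fix w assume w: "w \<in> TV n k g"
    obtain i j where ij: "w = (i, j)" by (cases w)
    show "w \<in> T_coord idx ` V"
    proof (cases "i = 0 \<and> j = 0")
      case True
      then have "w = T_coord idx r" using ij unfolding T_coord_def by simp
      then show ?thesis using root_in by blast
    next
      case False
      then have c: "i \<in> {1..g + (n - (k + 1) * g)}" "1 \<le> j" "j \<le> T_path_len k g i"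
        using w ij TV by auto
      then obtain b where b: "b \<in> heads" "idx b = i" using idx by (metis imageE)
      then have "j \<le> len b" using idx_len[OF b(1)] c(3) by simp
      then have "leg_at b j \<in> leg b" "d (leg_at b j) = j" using leg_at_in_leg[OF b(1) c(2)] by auto
      then have "leg_at b j \<in> V" "T_coord idx (leg_at b j) = w"
        using b ij unfolding leg_def T_coord_def by auto
      then show ?thesis by blast
    qed
  qed
qed

lemma T_coord_parent:
  assumes y: "y \<in> V" "y \<noteq> r"
  shows "T_coord idx (p y) = T_parent (T_coord idx y)"
proof (cases "d y = 1")
  case True
  then have "p y = r" using depth_eq_0 parent_in[OF y] depth_parent[OF y] by simp
  then show ?thesis using True y unfolding T_coord_def T_parent_def by simp
next
  case False
  then have dy: "2 \<le> d y" using depth_pos[OF y] by simp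
  have "p y \<noteq> r" using depth_parent[OF y] dy depth_root by auto
  moreover have "head (p y) = head y" using head_anc[OF y, of 1] dy anc_Suc[of 0 y] by simp
  moreover have "d (p y) = d y - 1" using depth_parent[OF y] by simp
  ultimately show ?thesis using y False unfolding T_coord_def T_parent_def by simp
qed

lemma graph_iso_T_if_leg_lengths:
  assumes k: "2 \<le> k" and g: "1 \<le> g" and deg_root: "deg E r = n - k * g"
    and kn: "(k + 1) * g \<le> n" and b0: "b0 \<in> heads" "len b0 = k"
    and others: "\<And>b. b \<in> heads - {b0} \<Longrightarrow> len b = 1 \<or> len b = k + 1"
    and long: "card {b\<in>heads. len b = k + 1} = g - 1"
  shows "graph_iso V E (TV n k g) (TE n k g)"
proof -
  have k1: "1 \<le> k" using k by simp
  have "card heads = g + (n - (k + 1) * g)"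
    using card_heads deg_root kn by (simp add: algebra_simps)
  then obtain idx where idx: "bij_betw idx heads {1..g + (n - (k + 1) * g)}"
    and idx_len: "\<And>b. b \<in> heads \<Longrightarrow> T_path_len k g (idx b) = len b"
    using exists_leg_indexing[OF finite_heads k b0 others long _ g] by blast
  have "bij_betw (T_coord idx) V (TV n k g)"
    using inj_on_T_coord T_coord_image[OF k1 g _ idx_len] idx unfolding bij_betw_def by blast
  then show ?thesis
    using rooted_tree_graph_iso[OF rooted_tree_axioms rooted_tree_T[OF k1 g]] T_coord_parent
    by (simp add: T_coord_def)
qed

end

lemma tree_degree_sequence_deg:
  assumes t: "tree V E" and "2 \<le> card V"
  shows "tree_degree_sequence V (deg E)"
proof
  show "finite V" using t unfolding tree_def graph_def by blast
  show "1 \<le> deg E v" if "v \<in> V" for v by (rule tree_deg_ge_1[OF t that \<open>2 \<le> card V\<close>])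
  show "(\<Sum>v\<in>V. deg E v) = 2 * (card V - 1)" by (rule tree_sum_deg[OF t])
qed

lemma spider_degrees_iff_graph_iso_T:
  assumes t: "tree V E" and k: "2 \<le> k" and g: "3 \<le> gamma_k V E k" and n: "card V = n"
    and kn: "(k + 1) * gamma_k V E k \<le> n"
  shows "spider_degrees V (deg E) (n - k * gamma_k V E k)
    \<longleftrightarrow> graph_iso V E (TV n k (gamma_k V E k)) (TE n k (gamma_k V E k))"
proof
  assume "graph_iso V E (TV n k (gamma_k V E k)) (TE n k (gamma_k V E k))"
  then show "spider_degrees V (deg E) (n - k * gamma_k V E k)"
    using spider_degrees_if_iso_T[of k "gamma_k V E k" n V E] k g kn t unfolding tree_def by simp
next
  assume "spider_degrees V (deg E) (n - k * gamma_k V E k)"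
  then obtain c where c: "c \<in> V" "deg E c = n - k * gamma_k V E k" "\<And>v. v \<in> V - {c} \<Longrightarrow> deg E v \<le> 2"
    unfolding spider_degrees_def by blast
  obtain p d where "rooted_tree V E c p d" using tree_rooted_tree[OF t c(1)] by blast
  then have "spider V E c p d" using c(3) unfolding spider_def spider_axioms_def by blast
  then interpret spider V E c p d .
  have fV: "finite V" using finite_vertices .
  have "deg E c = card V - k * gamma_k V E k" "(k + 1) * gamma_k V E k \<le> card V"
    using c(2) n kn by simp_all
  from leg_lengths[OF k g this gamma_k_le_card[OF fV]]
  obtain b0 where "b0 \<in> heads" "len b0 = k" "\<And>b. b \<in> heads - {b0} \<Longrightarrow> len b = 1 \<or> len b = k + 1"
    "card {b\<in>heads. len b = k + 1} = gamma_k V E k - 1"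
    by blast
  then show "graph_iso V E (TV n k (gamma_k V E k)) (TE n k (gamma_k V E k))"
    using graph_iso_T_if_leg_lengths[OF k _ c(2) kn] g by simp
qed

theorem theorem3p5:
  fixes V :: "'a set" and E :: "'a set set" and n k :: nat
  assumes "k \<ge> 2" and "tree V E" and "card V = n" and "gamma_k V E k \<ge> 3"
  shows "Pi1 V E \<ge> 4 ^ (k * gamma_k V E k - 1) * (n - k * gamma_k V E k) ^ 2
       \<and> Pi2 V E \<le> 4 ^ (k * gamma_k V E k - 1) * (n - k * gamma_k V E k) ^ (n - k * gamma_k V E k)
       \<and> (Pi1 V E = 4 ^ (k * gamma_k V E k - 1) * (n - k * gamma_k V E k) ^ 2
            \<longleftrightarrow> graph_iso V E (TV n k (gamma_k V E k)) (TE n k (gamma_k V E k)))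
       \<and> (Pi2 V E = 4 ^ (k * gamma_k V E k - 1) * (n - k * gamma_k V E k) ^ (n - k * gamma_k V E k)
            \<longleftrightarrow> graph_iso V E (TV n k (gamma_k V E k)) (TE n k (gamma_k V E k)))"
proof -
  let ?g = "gamma_k V E k"
  have bounds: "k * ?g \<le> card {v\<in>V. 2 \<le> deg E v}" "(k + 1) * ?g \<le> n"
    using tree_gamma_k_bounds[OF assms(2), of k] assms by auto
  have "2 \<le> card V" using bounds(2) assms by (simp add: algebra_simps)
  then interpret tree_degree_sequence V "deg E" by (rule tree_degree_sequence_deg[OF assms(2)])
  have a: "1 \<le> k * ?g" "k * ?g \<le> card nonleaves"
    using assms bounds(1) unfolding nonleaves_def by simp_all
  have "Pi1 V E = (\<Prod>v\<in>V. deg E v ^ 2)" unfolding Pi1_def ..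
  moreover have "Pi2 V E = (\<Prod>v\<in>V. deg E v ^ deg E v)"
    using Pi2_eq_prod_deg_power assms(2) unfolding tree_def by blast
  ultimately show ?thesis
    using prod_square_bound[OF a] prod_pow_self_bound[OF a] assms(3)
      spider_degrees_iff_graph_iso_T[OF assms(2,1,4,3) bounds(2)] by simp
qed

end
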